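(* Consider AdaHedge for adversarial linear bandits (described in the context) with exploration distribution $\pi$ as in the context and exploration rates $\gamma_t=\min\bigl\{1/2,\ \sqrt{2.5\,d\ln K}\;t^{-1/2}\bigr\}$. Then for all real $m<M$ with $m\le0\le M$ and all oblivious sequences $y_1,y_2,\dots$ in $\mathbb{R}^d$ satisfying $\langle x,y_t\rangle\in[m,M]$ for all $t\ge1$ and all $x\in\mathcal{A}$, for all $T\ge1$, \[ R_T(y_{1:T})\le 12(M-m)\sqrt{dT\ln K}+18(M-m)\,d\ln K . \]
   Context: Oblivious adversarial linear bandits: a finite action set $\mathcal{A}\subset\mathbb{R}^d$ of cardinality $K\ge2$ that spans $\mathbb{R}^d$. The environment fixes beforehand vectors $y_t\in\mathbb{R}^d$, $t\ge1$. At round $t$ the player draws $X_t\in\mathcal{A}$ from a distribution $p_t$ on $\mathcal{A}$ and observes only $\langle X_t,y_t\rangle$. The range $[m,M]$ is unknown to the player. Regret: $R_T(y_{1:T})=\max_{x\in\mathcal{A}}\sum_{t=1}^T\langle x,y_t\rangle-\mathbb{E}[\sum_{t=1}^T\langle X_t,y_t\rangle]$. For a distribution $p$ on $\mathcal{A}$, $M(p)=\sum_{x\in\mathcal{A}}p(x)\,xx^\top$. The exploration distribution $\pi$ on $\mathcal{A}$ is chosen so that $M(\pi)$ is invertible and $\max_{x\in\mathcal{A}}x^\top M(\pi)^{-1}x=d$ (such $\pi$ exists when $\mathcal{A}$ spans $\mathbb{R}^d$). Algorithm: $\eta_1=+\infty$, $q_1$ uniform on $\mathcal{A}$. For $t\ge1$: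 $p_t=(1-\gamma_t)q_t+\gamma_t\pi$; draw $X_t\sim p_t$; observe $\langle X_t,y_t\rangle$; set $\widehat y_t=M(p_t)^{-1}X_t\langle X_t,y_t\rangle$; compute $\delta_t=-\sum_{x}q_t(x)\langle x,\widehat y_t\rangle+\frac1{\eta_t}\ln\bigl(\sum_x q_t(x)e^{\eta_t\langle x,\widehat y_t\rangle}\bigr)$ if $\eta_t<\infty$ and $\delta_t=-\sum_x q_t(x)\langle x,\widehat y_t\rangle+\max_x\langle x,\widehat y_t\rangle$ if $\eta_t=\infty$; set $\eta_{t+1}=\ln K/\sum_{s=1}^t\delta_s$; set $q_{t+1}(a)\propto\exp\bigl(\eta_{t+1}\sum_{s=1}^t\langle a,\widehat y_s\rangle\bigr)$, normalized over $a\in\mathcal{A}$. *)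

theory Defs
  imports "HOL-Analysis.Analysis"
begin

text \<open>Actions are vectors in real^'d (d = CARD('d)); a distribution on the finite action
set A is a function A -> real.  K = card A.\<close>

definition outer :: "real^'d \<Rightarrow> real^'d^'d" where
  "outer x = (\<chi> i j. x$i * x$j)"

definition Mmat :: "(real^'d) set \<Rightarrow> (real^'d \<Rightarrow> real) \<Rightarrow> real^'d^'d" where
  "Mmat A p = (\<Sum>x\<in>A. p x *\<^sub>R outer x)"

text \<open>q_{t} from cumulative estimate S = sum_{s<t} yhat_s and cumulative mixability gap
D = sum_{s<t} delta_s.  eta = ln K / D; eta = +infinity iff D = 0, in which case q is
uniform on the maximisers of <a,S> (for t = 1 this is the uniform distribution).\<close>
definition ah_argmax :: "(real^'d) set \<Rightarrow> real^'d \<Rightarrow> (real^'d) set" where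
  "ah_argmax A S = {a\<in>A. a \<bullet> S = Max ((\<lambda>b. b \<bullet> S) ` A)}"

definition ah_q :: "(real^'d) set \<Rightarrow> real^'d \<Rightarrow> real \<Rightarrow> real^'d \<Rightarrow> real" where
  "ah_q A S D a =
     (if D = 0 then (if a \<in> ah_argmax A S then 1 / real (card (ah_argmax A S)) else 0)
      else exp (ln (real (card A)) / D * (a \<bullet> S)) /
           (\<Sum>b\<in>A. exp (ln (real (card A)) / D * (b \<bullet> S))))"

definition ah_p :: "(real^'d) set \<Rightarrow> (real^'d \<Rightarrow> real) \<Rightarrow> real \<Rightarrow> real^'d \<Rightarrow> real \<Rightarrow> real^'d \<Rightarrow> real" where
  "ah_p A \<pi> g S D a = (1 - g) * ah_q A S D a + g * \<pi> a"

definition ah_yhat :: "(real^'d) set \<Rightarrow> (real^'d \<Rightarrow> real) \<Rightarrow> real^'d \<Rightarrow> real^'d \<Rightarrow> real^'d" where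
  "ah_yhat A p x y = (x \<bullet> y) *\<^sub>R (matrix_inv (Mmat A p) *v x)"

definition ah_delta :: "(real^'d) set \<Rightarrow> (real^'d \<Rightarrow> real) \<Rightarrow> real \<Rightarrow> real^'d \<Rightarrow> real" where
  "ah_delta A q D yh =
     (if D = 0 then - (\<Sum>x\<in>A. q x * (x \<bullet> yh)) + Max ((\<lambda>x. x \<bullet> yh) ` A)
      else - (\<Sum>x\<in>A. q x * (x \<bullet> yh)) +
           (D / ln (real (card A))) *
             ln (\<Sum>x\<in>A. q x * exp (ln (real (card A)) / D * (x \<bullet> yh))))"

primrec ah_state :: "(real^'d) set \<Rightarrow> (real^'d \<Rightarrow> real) \<Rightarrow> (nat \<Rightarrow> real) \<Rightarrow>
    (nat \<Rightarrow> real^'d) \<Rightarrow> (nat \<Rightarrow> real^'d) \<Rightarrow> nat \<Rightarrow> (real^'d) \<times> real" where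
  "ah_state A \<pi> \<gamma> y X 0 = (0, 0)"
| "ah_state A \<pi> \<gamma> y X (Suc t) =
     (case ah_state A \<pi> \<gamma> y X t of (S, D) \<Rightarrow>
       (let q = ah_q A S D;
            p = ah_p A \<pi> (\<gamma> (Suc t)) S D;
            yh = ah_yhat A p (X (Suc t)) (y (Suc t))
        in (S + yh, D + ah_delta A q D yh)))"

text \<open>p_t(a) given the history X 1 .. X (t-1)\<close>
definition ah_pt :: "(real^'d) set \<Rightarrow> (real^'d \<Rightarrow> real) \<Rightarrow> (nat \<Rightarrow> real) \<Rightarrow>
    (nat \<Rightarrow> real^'d) \<Rightarrow> (nat \<Rightarrow> real^'d) \<Rightarrow> nat \<Rightarrow> real^'d \<Rightarrow> real" where
  "ah_pt A \<pi> \<gamma> y X t a =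
     ah_p A \<pi> (\<gamma> t) (fst (ah_state A \<pi> \<gamma> y X (t - 1))) (snd (ah_state A \<pi> \<gamma> y X (t - 1))) a"

text \<open>E[sum_{t=1}^T <X_t,y_t>], summing over all action trajectories with their probabilities.\<close>
definition ah_expected_reward :: "(real^'d) set \<Rightarrow> (real^'d \<Rightarrow> real) \<Rightarrow> (nat \<Rightarrow> real) \<Rightarrow>
    (nat \<Rightarrow> real^'d) \<Rightarrow> nat \<Rightarrow> real" where
  "ah_expected_reward A \<pi> \<gamma> y T =
     (\<Sum>X\<in>PiE {1..T} (\<lambda>_. A).
        (\<Prod>t\<in>{1..T}. ah_pt A \<pi> \<gamma> y X t (X t)) * (\<Sum>t=1..T. X t \<bullet> y t))"

definition ah_regret :: "(real^'d) set \<Rightarrow> (real^'d \<Rightarrow> real) \<Rightarrow> (nat \<Rightarrow> real) \<Rightarrow>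
    (nat \<Rightarrow> real^'d) \<Rightarrow> nat \<Rightarrow> real" where
  "ah_regret A \<pi> \<gamma> y T =
     Max ((\<lambda>x. \<Sum>t=1..T. x \<bullet> y t) ` A) - ah_expected_reward A \<pi> \<gamma> y T"

definition ah_gamma :: "(real^'d) set \<Rightarrow> nat \<Rightarrow> real" where
  "ah_gamma A t = min (1/2)
     (sqrt (5/2 * real CARD('d) * ln (real (card A))) / sqrt (real t))"

end

theory Submission
  imports Defs
begin

text \<open>
  Mixing the Hedge weights \<open>q\<^sub>t\<close> with \<open>\<gamma>\<^sub>t \<pi>\<close> makes \<open>M(p\<^sub>t)\<close> invertible with
  \<open>x\<^sup>T M(p\<^sub>t)\<^sup>-\<^sup>1 x \<le> d / \<gamma>\<^sub>t\<close> on \<open>A\<close>. Hence the estimates \<open>\<^bold>y\<^sub>t\<close> of \<open>y\<^sub>t\<close> are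
  unbiased, \<open>\<bar>\<langle>x, \<^bold>y\<^sub>t\<rangle>\<bar> \<le> (M - m) d / \<gamma>\<^sub>t\<close>, and \<open>\<langle>x, \<^bold>y\<^sub>t\<rangle>\<close> has second moment
  at most \<open>2 d (M - m)\<^sup>2\<close> under \<open>q\<^sub>t \<otimes> p\<^sub>t\<close>. Along every action path, AdaHedge run
  on the estimates has regret at most twice its cumulative mixability gap \<open>\<Delta>\<^sub>T\<close>
  (a potential argument), and a Bernstein-type bound on each gap gives
  \<open>\<Delta>\<^sub>T\<^sup>2 \<le> ln K \<cdot> V\<^sub>T + (2/3 ln K + 1) B \<Delta>\<^sub>T\<close>, where \<open>V\<^sub>T\<close> is the cumulative
  second moment and \<open>B\<close> the range of the estimates. Taking expectations (Jensen for the
  square root) and paying \<open>(M - m) \<gamma>\<^sub>t\<close> per round for exploration gives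
  \<open>2 (M - m) \<surd>(2 d T ln K) + 4 (M - m) (2/3 ln K + 1) d / \<gamma>\<^sub>T + (M - m) \<Sigma> \<gamma>\<^sub>t\<close>,
  and the choice of \<open>\<gamma>\<^sub>t\<close> balances these terms.
\<close>

section \<open>Finite distributions and the matrix \<open>M(p)\<close>\<close>

definition distribution_on :: "'a set \<Rightarrow> ('a \<Rightarrow> real) \<Rightarrow> bool" where
  "distribution_on A q \<longleftrightarrow> (\<forall>a\<in>A. 0 \<le> q a) \<and> sum q A = 1"

lemma distribution_onD:
  assumes "distribution_on A q"
  shows "a \<in> A \<Longrightarrow> 0 \<le> q a" and "sum q A = 1"
  using assms unfolding distribution_on_def by auto

lemma distribution_on_mean_le:
  assumes "distribution_on A q" and "\<And>a. a \<in> A \<Longrightarrow> f a \<le> c"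
  shows "(\<Sum>a\<in>A. q a * f a) \<le> c"
proof -
  have "(\<Sum>a\<in>A. q a * f a) \<le> (\<Sum>a\<in>A. q a * c)"
    using assms by (intro sum_mono mult_left_mono) (auto dest: distribution_onD)
  also have "\<dots> = c"
    using distribution_onD(2)[OF assms(1)] by (simp add: sum_distrib_right[symmetric])
  finally show ?thesis .
qed

lemma distribution_on_mean_ge:
  assumes "distribution_on A q" and "\<And>a. a \<in> A \<Longrightarrow> c \<le> f a"
  shows "c \<le> (\<Sum>a\<in>A. q a * f a)"
  using distribution_on_mean_le[OF assms(1), of "\<lambda>a. - f a" "- c"] assms(2)
  by (simp add: sum_negf)

lemma Mmat_mult_vector:
  fixes A :: "(real^'d) set"
  assumes "finite A"
  shows "Mmat A p *v u = (\<Sum>a\<in>A. (p a * (a \<bullet> u)) *\<^sub>R a)"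
  unfolding Mmat_def
  by (simp add: vec_eq_iff matrix_vector_mult_def outer_def sum_component inner_vec_def
        sum_distrib_left sum_distrib_right mult.assoc mult.left_commute)
   (subst sum.swap, auto intro!: sum.cong)

lemma inner_Mmat_mult_vector:
  fixes A :: "(real^'d) set"
  assumes "finite A"
  shows "(Mmat A p *v u) \<bullet> v = (\<Sum>a\<in>A. p a * (a \<bullet> u) * (a \<bullet> v))"
  by (simp add: Mmat_mult_vector[OF assms] inner_sum_left)

lemma matrix_inv_mult:
  fixes N :: "real^'d^'d"
  assumes "invertible N"
  shows "N ** matrix_inv N = mat 1" and "matrix_inv N ** N = mat 1"
  using someI_ex[OF assms[unfolded invertible_def]] unfolding matrix_inv_def by auto

lemma matrix_inv_mult_vector:
  fixes N :: "real^'d^'d"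
  assumes "invertible N"
  shows "N *v (matrix_inv N *v x) = x" and "matrix_inv N *v (N *v x) = x"
  by (simp_all add: matrix_vector_mul_assoc matrix_inv_mult[OF assms])

lemma invertible_Mmat_if_dominates:
  fixes A :: "(real^'d) set"
  assumes A: "finite A" and g: "0 < g" and dom: "\<And>a. a \<in> A \<Longrightarrow> g * \<pi> a \<le> p a"
    and \<pi>: "\<And>a. a \<in> A \<Longrightarrow> 0 \<le> \<pi> a" and inv: "invertible (Mmat A \<pi>)"
  shows "invertible (Mmat A p)"
  unfolding invertible_left_inverse matrix_left_invertible_ker
proof (intro allI impI)
  fix w assume "Mmat A p *v w = 0"
  hence zero: "(\<Sum>a\<in>A. p a * (a \<bullet> w) * (a \<bullet> w)) = 0"
    using inner_Mmat_mult_vector[OF A, of p w w] by simp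
  have nonneg: "0 \<le> \<pi> a * (a \<bullet> w) * (a \<bullet> w)" if "a \<in> A" for a
    using \<pi>[OF that] by (simp add: mult.assoc)
  have "g * (\<Sum>a\<in>A. \<pi> a * (a \<bullet> w) * (a \<bullet> w)) = (\<Sum>a\<in>A. g * (\<pi> a * (a \<bullet> w) * (a \<bullet> w)))"
    by (simp add: sum_distrib_left)
  also have "\<dots> \<le> (\<Sum>a\<in>A. p a * (a \<bullet> w) * (a \<bullet> w))"
    by (rule sum_mono) (use mult_right_mono[OF dom, of _ "(_ \<bullet> w) * (_ \<bullet> w)"] in \<open>simp add: ac_simps\<close>)
  also have "\<dots> = 0" by (rule zero)
  finally have "g * (\<Sum>a\<in>A. \<pi> a * (a \<bullet> w) * (a \<bullet> w)) \<le> 0" .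
  moreover have "0 \<le> (\<Sum>a\<in>A. \<pi> a * (a \<bullet> w) * (a \<bullet> w))" by (rule sum_nonneg) (rule nonneg)
  ultimately have "(\<Sum>a\<in>A. \<pi> a * (a \<bullet> w) * (a \<bullet> w)) = 0"
    using g by (simp add: mult_le_0_iff)
  hence "\<forall>a\<in>A. \<pi> a * (a \<bullet> w) * (a \<bullet> w) = 0"
    by (subst (asm) sum_nonneg_eq_0_iff[OF A]) (use nonneg in auto)
  hence "\<forall>a\<in>A. \<pi> a * (a \<bullet> w) = 0" by simp
  hence "Mmat A \<pi> *v w = 0" unfolding Mmat_mult_vector[OF A] by (intro sum.neutral) auto
  thus "w = 0" using matrix_inv_mult_vector(2)[OF inv, of w] by simp
qed

lemma inner_matrix_inv_Mmat:
  fixes A :: "(real^'d) set"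
  assumes A: "finite A" and inv: "invertible (Mmat A p)"
  defines "B \<equiv> matrix_inv (Mmat A p)"
  shows "x \<bullet> (B *v z) = (\<Sum>a\<in>A. p a * (a \<bullet> (B *v x)) * (a \<bullet> (B *v z)))"
  using inner_Mmat_mult_vector[OF A, of p "B *v x" "B *v z"]
  by (simp add: B_def matrix_inv_mult_vector[OF inv])

lemma inner_matrix_inv_Mmat_commute:
  fixes A :: "(real^'d) set"
  assumes "finite A" and "invertible (Mmat A p)"
  shows "x \<bullet> (matrix_inv (Mmat A p) *v z) = z \<bullet> (matrix_inv (Mmat A p) *v x)"
  unfolding inner_matrix_inv_Mmat[OF assms, of x z] inner_matrix_inv_Mmat[OF assms, of z x]
  by (simp add: ac_simps)

lemma inner_matrix_inv_Mmat_nonneg: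
  fixes A :: "(real^'d) set"
  assumes "finite A" and "invertible (Mmat A p)" and "\<And>a. a \<in> A \<Longrightarrow> 0 \<le> p a"
  shows "0 \<le> x \<bullet> (matrix_inv (Mmat A p) *v x)"
  unfolding inner_matrix_inv_Mmat[OF assms(1,2), of x x]
  by (rule sum_nonneg) (simp add: assms(3) mult.assoc)

lemma abs_inner_matrix_inv_Mmat_le:
  fixes A :: "(real^'d) set"
  assumes A: "finite A" and inv: "invertible (Mmat A p)" and p: "\<And>a. a \<in> A \<Longrightarrow> 0 \<le> p a"
  defines "B \<equiv> matrix_inv (Mmat A p)"
  shows "\<bar>x \<bullet> (B *v z)\<bar> \<le> (x \<bullet> (B *v x) + z \<bullet> (B *v z)) / 2"
proof -
  define u v where "u = B *v x" and "v = B *v z"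
  let ?Q = "\<lambda>u v. \<Sum>a\<in>A. p a * (a \<bullet> u) * (a \<bullet> v)"
  have "?Q u u - 2 * ?Q u v + ?Q v v = (\<Sum>a\<in>A. p a * ((a \<bullet> u) - (a \<bullet> v))^2)"
    by (simp add: power2_eq_square algebra_simps sum.distrib sum_subtractf sum_distrib_left)
  moreover have "?Q u u + 2 * ?Q u v + ?Q v v = (\<Sum>a\<in>A. p a * ((a \<bullet> u) + (a \<bullet> v))^2)"
    by (simp add: power2_eq_square algebra_simps sum.distrib sum_distrib_left)
  moreover have "0 \<le> (\<Sum>a\<in>A. p a * ((a \<bullet> u) - (a \<bullet> v))^2)"
    and "0 \<le> (\<Sum>a\<in>A. p a * ((a \<bullet> u) + (a \<bullet> v))^2)"
    by (simp_all add: p sum_nonneg)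
  moreover have "x \<bullet> (B *v z) = ?Q u v" "x \<bullet> (B *v x) = ?Q u u" "z \<bullet> (B *v z) = ?Q v v"
    unfolding u_def v_def B_def by (rule inner_matrix_inv_Mmat[OF A inv])+
  ultimately show ?thesis by (simp add: abs_le_iff)
qed

lemma sum_Mmat_estimate:
  fixes A :: "(real^'d) set"
  assumes A: "finite A" and inv: "invertible (Mmat A p)"
  shows "(\<Sum>a\<in>A. p a *\<^sub>R ((a \<bullet> y) *\<^sub>R (matrix_inv (Mmat A p) *v a))) = y"
proof -
  have "(\<Sum>a\<in>A. p a *\<^sub>R ((a \<bullet> y) *\<^sub>R (matrix_inv (Mmat A p) *v a)))
      = matrix_inv (Mmat A p) *v (\<Sum>a\<in>A. (p a * (a \<bullet> y)) *\<^sub>R a)"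
    by (simp add: linear_sum[OF matrix_vector_mul_linear] matrix_vector_mult_scaleR)
  also have "\<dots> = matrix_inv (Mmat A p) *v (Mmat A p *v y)"
    by (simp add: Mmat_mult_vector[OF A] inner_commute)
  finally show ?thesis by (simp add: matrix_inv_mult_vector(2)[OF inv])
qed

lemma sum_inner_matrix_inv_Mmat_square:
  fixes A :: "(real^'d) set"
  assumes "finite A" and "invertible (Mmat A p)"
  shows "(\<Sum>a\<in>A. p a * (x \<bullet> (matrix_inv (Mmat A p) *v a))^2) = x \<bullet> (matrix_inv (Mmat A p) *v x)"
  unfolding inner_matrix_inv_Mmat[OF assms, of x x]
proof (rule sum.cong)
  fix a assume "a \<in> A"
  show "p a * (x \<bullet> (matrix_inv (Mmat A p) *v a))^2
      = p a * (a \<bullet> (matrix_inv (Mmat A p) *v x)) * (a \<bullet> (matrix_inv (Mmat A p) *v x))"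
    using inner_matrix_inv_Mmat_commute[OF assms, of x a] by (simp add: power2_eq_square)
qed simp

lemma Mmat_nth:
  fixes A :: "(real^'d) set"
  shows "Mmat A p $ i $ j = (\<Sum>x\<in>A. p x * (x$i * x$j))"
  unfolding Mmat_def by (simp add: sum_component outer_def)

lemma sum_inner_matrix_inv_Mmat_eq_dim:
  fixes A :: "(real^'d) set"
  assumes inv: "invertible (Mmat A p)"
  shows "(\<Sum>x\<in>A. p x * (x \<bullet> (matrix_inv (Mmat A p) *v x))) = real CARD('d)"
proof -
  let ?B = "matrix_inv (Mmat A p)"
  have "(\<Sum>x\<in>A. p x * (x \<bullet> (?B *v x)))
      = (\<Sum>x\<in>A. \<Sum>i\<in>UNIV. \<Sum>j\<in>UNIV. p x * (x$i * (x$j * ?B$i$j)))"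
    by (simp add: inner_vec_def matrix_vector_mult_def sum_distrib_left sum_distrib_right ac_simps)
  also have "\<dots> = (\<Sum>i\<in>UNIV. \<Sum>j\<in>UNIV. \<Sum>x\<in>A. p x * (x$i * (x$j * ?B$i$j)))"
    by (simp add: sum.swap[of _ A] sum.swap[of _ A UNIV])
  also have "\<dots> = (\<Sum>i\<in>UNIV. \<Sum>j\<in>UNIV. ?B$i$j * Mmat A p $ j $ i)"
    by (intro sum.cong refl) (simp add: Mmat_nth sum_distrib_left ac_simps)
  also have "\<dots> = (\<Sum>i\<in>UNIV. (?B ** Mmat A p) $ i $ i)"
    by (simp add: matrix_matrix_mult_def)
  also have "\<dots> = (\<Sum>i\<in>(UNIV::'d set). 1)"
    by (simp add: matrix_inv_mult(2)[OF inv] mat_def)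
  finally show ?thesis by simp
qed

lemma inner_matrix_inv_Mmat_le_if_dominates:
  fixes A :: "(real^'d) set"
  assumes A: "finite A" and g: "0 < g" and dom: "\<And>a. a \<in> A \<Longrightarrow> g * \<pi> a \<le> p a"
    and \<pi>: "\<And>a. a \<in> A \<Longrightarrow> 0 \<le> \<pi> a" and inv\<pi>: "invertible (Mmat A \<pi>)"
    and inv: "invertible (Mmat A p)"
  shows "x \<bullet> (matrix_inv (Mmat A p) *v x) \<le> (x \<bullet> (matrix_inv (Mmat A \<pi>) *v x)) / g"
proof -
  define w where "w = matrix_inv (Mmat A p) *v x"
  define z where "z = matrix_inv (Mmat A \<pi>) *v x"
  let ?Q = "\<lambda>u v. \<Sum>a\<in>A. \<pi> a * (a \<bullet> u) * (a \<bullet> v)"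
  have "g * (\<pi> a * (a \<bullet> w) * (a \<bullet> w)) \<le> p a * (a \<bullet> w) * (a \<bullet> w)" if "a \<in> A" for a
    using mult_right_mono[OF dom[OF that], of "(a \<bullet> w) * (a \<bullet> w)"] by (simp add: ac_simps)
  hence dominated: "g * ?Q w w \<le> x \<bullet> w"
    unfolding w_def inner_matrix_inv_Mmat[OF A inv, of x x] sum_distrib_left by (rule sum_mono)
  have zw: "?Q z w = x \<bullet> w" and zz: "?Q z z = x \<bullet> z"
    using inner_Mmat_mult_vector[OF A, of \<pi> z]
    by (simp_all add: z_def matrix_inv_mult_vector(1)[OF inv\<pi>])
  have "0 \<le> (\<Sum>a\<in>A. \<pi> a * (g * (a \<bullet> w) - (a \<bullet> z))^2)"
    by (rule sum_nonneg) (simp add: \<pi>)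
  also have "\<dots> = g * (g * ?Q w w) - 2 * (g * ?Q z w) + ?Q z z"
    by (simp add: power2_eq_square algebra_simps sum.distrib sum_subtractf sum_distrib_left)
  finally have "0 \<le> g * (g * ?Q w w) - 2 * (g * (x \<bullet> w)) + x \<bullet> z"
    unfolding zw zz .
  moreover have "g * (g * ?Q w w) \<le> g * (x \<bullet> w)"
    using dominated g by simp
  ultimately have "g * (x \<bullet> w) \<le> x \<bullet> z" by linarith
  thus ?thesis using g unfolding w_def z_def by (simp add: field_simps)
qed

section \<open>Exponential moment bounds\<close>

lemma exp_pade_bound:
  fixes u :: real
  assumes "0 \<le> u"
  shows "exp u * (6 - 2 * u) \<le> 6 + 4 * u + u^2"
proof -
  define f where "f v = (6 + 4 * v + v^2) * exp (- v) - (6 - 2 * v)" for v :: real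
  have deriv: "(f has_real_derivative (2 - (2 + 2 * v + v^2) * exp (- v))) (at v)" for v
    unfolding f_def by (auto intro!: derivative_eq_intros simp: algebra_simps power2_eq_square)
  have "0 \<le> 2 - (2 + 2 * v + v^2) * exp (- v)" if "0 \<le> v" for v :: real
  proof -
    have "2 + 2 * v + v^2 \<le> 2 * exp v" using exp_lower_Taylor_quadratic[OF that] by simp
    hence "(2 + 2 * v + v^2) * exp (- v) \<le> 2 * exp v * exp (- v)" by (simp add: mult_right_mono)
    also have "\<dots> = 2" by (simp add: exp_minus)
    finally show ?thesis by simp
  qed
  hence "f 0 \<le> f u" by (intro deriv_nonneg_imp_mono[OF deriv _ assms]) auto
  hence "(6 - 2 * u) * exp u \<le> (6 + 4 * u + u^2) * exp (- u) * exp u"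
    by (simp add: f_def mult_right_mono)
  also have "\<dots> = 6 + 4 * u + u^2" by (simp add: exp_minus)
  finally show ?thesis by (simp add: mult.commute)
qed

lemma exp_le_quadratic_of_nonpos:
  fixes u :: real
  assumes "u \<le> 0"
  shows "exp u \<le> 1 + u + u^2 / 2"
proof -
  define f where "f v = 1 + v + v^2 / 2 - exp v" for v :: real
  have "(f has_real_derivative (1 + v - exp v)) (at v)" for v
    unfolding f_def by (auto intro!: derivative_eq_intros simp: algebra_simps power2_eq_square)
  moreover have "1 + v - exp v \<le> 0" for v :: real
    using exp_ge_add_one_self[of v] by linarith
  ultimately have "f 0 \<le> f u" by (rule deriv_nonpos_imp_antimono[OF _ _ assms])
  thus ?thesis by (simp add: f_def)
qed

lemma exp_bernstein_bound:
  fixes u \<beta> :: real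
  assumes "u \<le> \<beta>" and "0 \<le> \<beta>" and "\<beta> < 3"
  shows "(exp u - 1 - u) * (2 * (1 - \<beta> / 3)) \<le> u^2"
proof (cases "u \<le> 0")
  case True
  have "0 \<le> exp u - 1 - u" using exp_ge_add_one_self[of u] by linarith
  hence "(exp u - 1 - u) * (2 * (1 - \<beta> / 3)) \<le> (exp u - 1 - u) * 2"
    using assms by (intro mult_left_mono) auto
  also have "\<dots> \<le> u^2" using exp_le_quadratic_of_nonpos[OF True] by simp
  finally show ?thesis .
next
  case False
  have "0 \<le> exp u - 1 - u" using exp_ge_add_one_self[of u] by linarith
  hence "(exp u - 1 - u) * (6 - 2 * \<beta>) \<le> (exp u - 1 - u) * (6 - 2 * u)"
    using assms by (intro mult_left_mono) auto
  also have "\<dots> \<le> 3 * u^2"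
    using exp_pade_bound[of u] False by (simp add: algebra_simps power2_eq_square)
  finally have "(exp u - 1 - u) * (6 - 2 * \<beta>) \<le> 3 * u^2" .
  moreover have "(exp u - 1 - u) * (2 * (1 - \<beta> / 3)) = (exp u - 1 - u) * (6 - 2 * \<beta>) / 3"
    by (simp add: field_simps)
  ultimately show ?thesis by linarith
qed

lemma ln_le_of_le_exp:
  fixes x y :: real
  assumes "0 < x" and "x \<le> exp y"
  shows "ln x \<le> y"
  using assms ln_le_cancel_iff[of x "exp y"] by simp

lemma sum_exp_ge_one:
  assumes q: "distribution_on A q" and centred: "(\<Sum>x\<in>A. q x * u x) = 0"
  shows "1 \<le> (\<Sum>x\<in>A. q x * exp (u x))"
proof -
  have "1 = (\<Sum>x\<in>A. q x * (1 + u x))"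
    using distribution_onD(2)[OF q] centred by (simp add: algebra_simps sum.distrib)
  also have "\<dots> \<le> (\<Sum>x\<in>A. q x * exp (u x))"
    using distribution_onD(1)[OF q] by (intro sum_mono mult_left_mono) auto
  finally show ?thesis by simp
qed

lemma ln_sum_exp_le:
  assumes q: "distribution_on A q" and centred: "(\<Sum>x\<in>A. q x * u x) = 0"
    and bound: "\<And>x. x \<in> A \<Longrightarrow> u x \<le> \<beta>"
  shows "ln (\<Sum>x\<in>A. q x * exp (u x)) \<le> \<beta>"
proof -
  have "(\<Sum>x\<in>A. q x * exp (u x)) \<le> exp \<beta>"
    by (rule distribution_on_mean_le[OF q]) (simp add: bound)
  thus ?thesis using sum_exp_ge_one[OF q centred] by (intro ln_le_of_le_exp) auto
qed

lemma ln_sum_exp_bernstein: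
  assumes q: "distribution_on A q" and centred: "(\<Sum>x\<in>A. q x * u x) = 0"
    and bound: "\<And>x. x \<in> A \<Longrightarrow> u x \<le> \<beta>" and "0 \<le> \<beta>"
  shows "2 * ln (\<Sum>x\<in>A. q x * exp (u x)) * (1 - \<beta> / 3) \<le> (\<Sum>x\<in>A. q x * (u x)^2)"
proof -
  define Z where "Z = (\<Sum>x\<in>A. q x * exp (u x))"
  have q0: "\<And>x. x \<in> A \<Longrightarrow> 0 \<le> q x" using distribution_onD(1)[OF q] .
  have "0 \<le> ln Z" using sum_exp_ge_one[OF q centred] by (simp add: Z_def)
  show ?thesis
  proof (cases "\<beta> < 3")
    case False
    hence "2 * ln Z * (1 - \<beta> / 3) \<le> 0" using \<open>0 \<le> ln Z\<close> by (simp add: mult_nonneg_nonpos)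
    also have "0 \<le> (\<Sum>x\<in>A. q x * (u x)^2)" by (simp add: q0 sum_nonneg)
    finally show ?thesis by (simp add: Z_def)
  next
    case True
    have "ln Z \<le> Z - 1" using sum_exp_ge_one[OF q centred] by (simp add: Z_def ln_le_minus_one)
    also have "\<dots> = (\<Sum>x\<in>A. q x * (exp (u x) - 1 - u x))"
      using distribution_onD(2)[OF q] centred
      by (simp add: Z_def algebra_simps sum.distrib sum_subtractf)
    finally have "ln Z * (2 * (1 - \<beta> / 3))
        \<le> (\<Sum>x\<in>A. q x * (exp (u x) - 1 - u x)) * (2 * (1 - \<beta> / 3))"
      using True by (intro mult_right_mono) auto
    also have "\<dots> = (\<Sum>x\<in>A. q x * ((exp (u x) - 1 - u x) * (2 * (1 - \<beta> / 3))))"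
      by (simp add: sum_distrib_right mult.assoc)
    also have "\<dots> \<le> (\<Sum>x\<in>A. q x * (u x)^2)"
      using assms(4) True by (intro sum_mono mult_left_mono exp_bernstein_bound bound q0)
    finally show ?thesis by (simp add: Z_def algebra_simps)
  qed
qed

lemma sum_centred_eq_0:
  assumes "distribution_on A q"
  shows "(\<Sum>x\<in>A. q x * (c * (f x - (\<Sum>y\<in>A. q y * f y)))) = 0"
proof -
  define m where "m = (\<Sum>y\<in>A. q y * f y)"
  have "(\<Sum>x\<in>A. q x * (c * (f x - m))) = c * (\<Sum>x\<in>A. q x * f x) - c * m * sum q A"
    by (simp add: algebra_simps sum_subtractf sum_distrib_left sum_distrib_right)
  thus ?thesis using distribution_onD(2)[OF assms] by (simp add: m_def)
qed

lemma variance_le_second_moment: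
  fixes f :: "'a \<Rightarrow> real"
  assumes q: "distribution_on A q"
  defines "\<mu> \<equiv> \<Sum>x\<in>A. q x * f x"
  shows "(\<Sum>x\<in>A. q x * (f x - \<mu>)^2) \<le> (\<Sum>x\<in>A. q x * (f x)^2)"
proof -
  have "(\<Sum>x\<in>A. q x * (f x - \<mu>)^2) = (\<Sum>x\<in>A. q x * (f x)^2) - 2 * \<mu> * \<mu> + \<mu>^2 * (\<Sum>x\<in>A. q x)"
    by (simp add: \<mu>_def power2_diff algebra_simps sum.distrib sum_subtractf sum_distrib_left
        sum_distrib_right)
  thus ?thesis using distribution_onD(2)[OF q] by (simp add: power2_eq_square)
qed

section \<open>The mixability gap\<close>

lemma ah_q_distribution:
  fixes A :: "(real^'d) set"
  assumes A: "finite A" "A \<noteq> {}"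
  shows "distribution_on A (ah_q A S D)"
proof (cases "D = 0")
  case True
  define Am where "Am = ah_argmax A S"
  have "Am \<subseteq> A" unfolding Am_def ah_argmax_def by auto
  moreover have "Max ((\<lambda>b. b \<bullet> S) ` A) \<in> (\<lambda>b. b \<bullet> S) ` A"
    using A by (intro Max_in) auto
  hence "Am \<noteq> {}" unfolding Am_def ah_argmax_def by auto
  ultimately have "(\<Sum>a\<in>A. if a \<in> Am then 1 / real (card Am) else 0) = 1"
    using A by (simp add: sum.If_cases Int_absorb1 finite_subset)
  thus ?thesis using True unfolding distribution_on_def ah_q_def Am_def by simp
next
  case False
  have "0 < (\<Sum>b\<in>A. exp (ln (real (card A)) / D * (b \<bullet> S)))"
    using A by (intro sum_pos) auto
  thus ?thesis using False unfolding distribution_on_def ah_q_def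
    by (simp add: sum_divide_distrib[symmetric] less_imp_le)
qed

lemma ah_delta_pos_eq:
  fixes A :: "(real^'d) set" and g :: "real^'d"
  assumes q: "distribution_on A q" and K: "card A \<ge> 2" and D: "D > 0"
  defines "\<eta> \<equiv> ln (real (card A)) / D" and "\<mu> \<equiv> \<Sum>x\<in>A. q x * (x \<bullet> g)"
  shows "ah_delta A q D g = ln (\<Sum>x\<in>A. q x * exp (\<eta> * (x \<bullet> g - \<mu>))) / \<eta>"
proof -
  have \<eta>: "\<eta> > 0" unfolding \<eta>_def using K D by simp
  define Z where "Z = (\<Sum>x\<in>A. q x * exp (\<eta> * (x \<bullet> g - \<mu>)))"
  have "1 \<le> Z" unfolding Z_def \<mu>_def by (intro sum_exp_ge_one[OF q] sum_centred_eq_0[OF q])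
  have "(\<Sum>x\<in>A. q x * exp (\<eta> * (x \<bullet> g))) = exp (\<eta> * \<mu>) * Z"
    unfolding Z_def sum_distrib_left
    by (rule sum.cong) (simp_all add: algebra_simps flip: exp_add)
  hence "ln (\<Sum>x\<in>A. q x * exp (\<eta> * (x \<bullet> g))) = \<eta> * \<mu> + ln Z"
    using \<open>1 \<le> Z\<close> by (simp add: ln_mult)
  moreover have "ah_delta A q D g = - \<mu> + ln (\<Sum>x\<in>A. q x * exp (\<eta> * (x \<bullet> g))) / \<eta>"
    unfolding ah_delta_def using D by (simp add: \<eta>_def \<mu>_def)
  ultimately show ?thesis using \<eta> by (simp add: Z_def field_simps)
qed

lemma ah_delta_zero_eq:
  "ah_delta A q 0 g = Max ((\<lambda>x. x \<bullet> g) ` A) - (\<Sum>x\<in>A. q x * (x \<bullet> g))"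
  unfolding ah_delta_def by simp

lemma ah_delta_nonneg:
  fixes A :: "(real^'d) set"
  assumes A: "finite A" and q: "distribution_on A q" and K: "card A \<ge> 2" and D: "0 \<le> D"
  shows "0 \<le> ah_delta A q D g"
proof (cases "D = 0")
  case True
  have "(\<Sum>x\<in>A. q x * (x \<bullet> g)) \<le> Max ((\<lambda>x. x \<bullet> g) ` A)"
    using A by (intro distribution_on_mean_le[OF q]) auto
  thus ?thesis using True by (simp add: ah_delta_zero_eq)
next
  case False
  define \<eta> where "\<eta> = ln (real (card A)) / D"
  define \<mu> where "\<mu> = (\<Sum>x\<in>A. q x * (x \<bullet> g))"
  have "1 \<le> (\<Sum>x\<in>A. q x * exp (\<eta> * (x \<bullet> g - \<mu>)))"
    unfolding \<mu>_def by (intro sum_exp_ge_one[OF q] sum_centred_eq_0[OF q])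
  moreover have "0 < \<eta>" unfolding \<eta>_def using K D False by simp
  moreover have "ah_delta A q D g = ln (\<Sum>x\<in>A. q x * exp (\<eta> * (x \<bullet> g - \<mu>))) / \<eta>"
    using D False by (simp add: ah_delta_pos_eq[OF q K] \<eta>_def \<mu>_def)
  ultimately show ?thesis by simp
qed

lemma ah_delta_le:
  fixes A :: "(real^'d) set"
  assumes A: "finite A" and q: "distribution_on A q" and K: "card A \<ge> 2" and D: "0 \<le> D"
    and range: "\<And>x. x \<in> A \<Longrightarrow> x \<bullet> g - (\<Sum>x\<in>A. q x * (x \<bullet> g)) \<le> B"
  shows "ah_delta A q D g \<le> B"
proof (cases "D = 0")
  case True
  have "Max ((\<lambda>x. x \<bullet> g) ` A) \<in> (\<lambda>x. x \<bullet> g) ` A"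
    using A K by (intro Max_in) auto
  thus ?thesis using True range by (auto simp: ah_delta_zero_eq)
next
  case False
  define \<eta> where "\<eta> = ln (real (card A)) / D"
  define \<mu> where "\<mu> = (\<Sum>x\<in>A. q x * (x \<bullet> g))"
  have \<eta>: "0 < \<eta>" unfolding \<eta>_def using K D False by simp
  have "ln (\<Sum>x\<in>A. q x * exp (\<eta> * (x \<bullet> g - \<mu>))) \<le> \<eta> * B"
    unfolding \<mu>_def using \<eta> range
    by (intro ln_sum_exp_le[OF q] sum_centred_eq_0[OF q] mult_left_mono) auto
  moreover have "ah_delta A q D g = ln (\<Sum>x\<in>A. q x * exp (\<eta> * (x \<bullet> g - \<mu>))) / \<eta>"
    using D False by (simp add: ah_delta_pos_eq[OF q K] \<eta>_def \<mu>_def)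
  ultimately show ?thesis using \<eta> by (simp add: divide_le_eq mult.commute)
qed

lemma ah_delta_bernstein:
  fixes A :: "(real^'d) set"
  assumes A: "finite A" and q: "distribution_on A q" and K: "card A \<ge> 2" and D: "0 \<le> D"
    and B: "0 \<le> B" and range: "\<And>x. x \<in> A \<Longrightarrow> x \<bullet> g - (\<Sum>x\<in>A. q x * (x \<bullet> g)) \<le> B"
  shows "2 * D * ah_delta A q D g \<le> ln (real (card A)) * (\<Sum>x\<in>A. q x * (x \<bullet> g)^2)
      + 2/3 * ln (real (card A)) * B * ah_delta A q D g"
proof (cases "D = 0")
  case True
  have "0 \<le> (\<Sum>x\<in>A. q x * (x \<bullet> g)^2)" using distribution_onD(1)[OF q] by (simp add: sum_nonneg)
  thus ?thesis using True K B ah_delta_nonneg[OF A q K D] by simp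
next
  case False
  define L where "L = ln (real (card A))"
  define \<eta> where "\<eta> = L / D"
  define \<mu> where "\<mu> = (\<Sum>x\<in>A. q x * (x \<bullet> g))"
  define u where "u x = \<eta> * (x \<bullet> g - \<mu>)" for x
  define Z where "Z = (\<Sum>x\<in>A. q x * exp (u x))"
  have L: "0 < L" unfolding L_def using K by simp
  have \<eta>: "0 < \<eta>" unfolding \<eta>_def using L D False by simp
  have \<delta>: "ah_delta A q D g = ln Z / \<eta>"
    using D False by (simp add: ah_delta_pos_eq[OF q K] Z_def u_def \<eta>_def L_def \<mu>_def)
  have "2 * ln Z * (1 - \<eta> * B / 3) \<le> (\<Sum>x\<in>A. q x * (u x)^2)"
    unfolding Z_def u_def \<mu>_def using \<eta> B range
    by (intro ln_sum_exp_bernstein[OF q] sum_centred_eq_0[OF q] mult_left_mono) auto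
  also have "\<dots> = \<eta>^2 * (\<Sum>x\<in>A. q x * (x \<bullet> g - \<mu>)^2)"
    by (simp add: u_def sum_distrib_left power_mult_distrib mult.left_commute)
  also have "\<dots> \<le> \<eta>^2 * (\<Sum>x\<in>A. q x * (x \<bullet> g)^2)"
    unfolding \<mu>_def by (intro mult_left_mono variance_le_second_moment[OF q]) simp
  finally have "L / \<eta>^2 * (2 * ln Z * (1 - \<eta> * B / 3)) \<le> L / \<eta>^2 * (\<eta>^2 * (\<Sum>x\<in>A. q x * (x \<bullet> g)^2))"
    using L \<eta> by (intro mult_left_mono) auto
  hence "L / \<eta>^2 * (2 * ln Z * (1 - \<eta> * B / 3)) \<le> L * (\<Sum>x\<in>A. q x * (x \<bullet> g)^2)"
    using \<eta> by simp
  moreover have "2 * D * (ln Z / \<eta>) = L / \<eta>^2 * (2 * ln Z * (1 - \<eta> * B / 3)) + 2/3 * L * B * (ln Z / \<eta>)"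
    using L \<eta> unfolding \<eta>_def by (simp add: field_simps power2_eq_square)
  ultimately show ?thesis unfolding \<delta> L_def by linarith
qed

section \<open>The AdaHedge potential\<close>

text \<open>The mix loss of the uniform prior at learning rate \<open>ln K / D\<close>, with its limit \<open>max\<close>
  at infinite learning rate for \<open>D = 0\<close>.\<close>

definition ah_potential :: "(real^'d) set \<Rightarrow> real \<Rightarrow> real^'d \<Rightarrow> real" where
  "ah_potential A D S = (if D = 0 then Max ((\<lambda>x. x \<bullet> S) ` A)
     else D / ln (real (card A)) *
       ln ((\<Sum>x\<in>A. exp (ln (real (card A)) / D * (x \<bullet> S))) / real (card A)))"

lemma ln_mean_exp_le_Max:
  fixes f :: "'a \<Rightarrow> real"
  assumes A: "finite A" "A \<noteq> {}" and \<eta>: "0 < \<eta>"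
  shows "ln ((\<Sum>x\<in>A. exp (\<eta> * f x)) / real (card A)) \<le> \<eta> * Max (f ` A)"
proof -
  have "(\<Sum>x\<in>A. exp (\<eta> * f x)) \<le> (\<Sum>x\<in>A. exp (\<eta> * Max (f ` A)))"
    using A \<eta> by (intro sum_mono) auto
  hence "(\<Sum>x\<in>A. exp (\<eta> * f x)) / real (card A) \<le> exp (\<eta> * Max (f ` A))"
    using A by (simp add: divide_le_eq card_gt_0_iff mult.commute)
  moreover have "0 < (\<Sum>x\<in>A. exp (\<eta> * f x))" using A by (intro sum_pos) auto
  ultimately show ?thesis using A by (intro ln_le_of_le_exp) (auto simp: card_gt_0_iff)
qed

lemma Max_le_ln_mean_exp:
  fixes f :: "'a \<Rightarrow> real"
  assumes A: "finite A" "A \<noteq> {}"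
  shows "\<eta> * Max (f ` A) - ln (real (card A)) \<le> ln ((\<Sum>x\<in>A. exp (\<eta> * f x)) / real (card A))"
proof -
  have "Max (f ` A) \<in> f ` A" using A by (intro Max_in) auto
  then obtain x0 where x0: "x0 \<in> A" "f x0 = Max (f ` A)" by (metis imageE)
  have "exp (\<eta> * Max (f ` A)) \<le> (\<Sum>x\<in>A. exp (\<eta> * f x))"
    using member_le_sum[of x0 A "\<lambda>x. exp (\<eta> * f x)"] x0 A by simp
  hence "ln (exp (\<eta> * Max (f ` A)) / real (card A)) \<le> ln ((\<Sum>x\<in>A. exp (\<eta> * f x)) / real (card A))"
    using A sum_pos[of A "\<lambda>x. exp (\<eta> * f x)"]
    by (subst ln_le_cancel_iff) (auto simp: divide_right_mono card_gt_0_iff)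
  thus ?thesis using A by (simp add: ln_div card_gt_0_iff)
qed

text \<open>Concavity of \<open>t \<mapsto> t\<^sup>r\<close> for \<open>0 < r \<le> 1\<close>, in logarithmic form.\<close>

lemma ln_mean_exp_scale_le:
  fixes h :: "'a \<Rightarrow> real"
  assumes A: "finite A" "A \<noteq> {}" and r: "0 < r" "r \<le> 1"
  shows "ln ((\<Sum>x\<in>A. exp (r * h x)) / real (card A)) \<le> r * ln ((\<Sum>x\<in>A. exp (h x)) / real (card A))"
proof -
  define K where "K = real (card A)"
  define c where "c = (\<Sum>x\<in>A. exp (h x)) / K"
  have K: "0 < K" unfolding K_def using A by (simp add: card_gt_0_iff)
  have c: "0 < c" unfolding c_def using A K by (intro divide_pos_pos sum_pos) auto
  have "exp (r * h x) \<le> ((1 - r) + r * (exp (h x) / c)) * exp (r * ln c)" for x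
  proof -
    have "exp ((1 - r) *\<^sub>R 0 + r *\<^sub>R (h x - ln c)) \<le> (1 - r) * exp 0 + r * exp (h x - ln c)"
      using r by (intro convex_onD[OF exp_convex]) auto
    hence "exp (r * (h x - ln c)) * exp (r * ln c) \<le> ((1 - r) + r * (exp (h x) / c)) * exp (r * ln c)"
      using c by (simp add: exp_diff mult_right_mono)
    thus ?thesis by (simp add: algebra_simps flip: exp_add)
  qed
  hence "(\<Sum>x\<in>A. exp (r * h x)) \<le> (\<Sum>x\<in>A. ((1 - r) + r * (exp (h x) / c)) * exp (r * ln c))"
    by (rule sum_mono)
  also have "\<dots> = (\<Sum>x\<in>A. (r / c * exp (r * ln c)) * exp (h x) + (1 - r) * exp (r * ln c))"
    by (rule sum.cong) (auto simp: algebra_simps)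
  also have "\<dots> = r / c * exp (r * ln c) * (\<Sum>x\<in>A. exp (h x)) + K * ((1 - r) * exp (r * ln c))"
    by (simp add: K_def sum.distrib sum_distrib_left)
  also have "\<dots> = K * exp (r * ln c)"
    using c K unfolding c_def by (simp add: field_simps)
  finally have "(\<Sum>x\<in>A. exp (r * h x)) / K \<le> exp (r * ln c)"
    using K by (simp add: divide_le_eq mult.commute)
  moreover have "0 < (\<Sum>x\<in>A. exp (r * h x))" using A by (intro sum_pos) auto
  ultimately show ?thesis using K unfolding K_def c_def by (intro ln_le_of_le_exp) auto
qed

lemma ah_potential_ge_Max:
  fixes A :: "(real^'d) set"
  assumes A: "finite A" and K: "card A \<ge> 2" and D: "0 \<le> D"
  shows "Max ((\<lambda>x. x \<bullet> S) ` A) - D \<le> ah_potential A D S"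
proof (cases "D = 0")
  case False
  define L where "L = ln (real (card A))"
  have L: "0 < L" unfolding L_def using K by simp
  have A': "A \<noteq> {}" using K by auto
  have "D / L * (L / D * Max ((\<lambda>x. x \<bullet> S) ` A) - L)
      \<le> D / L * ln ((\<Sum>x\<in>A. exp (L / D * (x \<bullet> S))) / real (card A))"
    using Max_le_ln_mean_exp[OF A A', of "L / D" "\<lambda>x. x \<bullet> S"] L D unfolding L_def
    by (intro mult_left_mono) auto
  moreover have "D / L * (L / D * Max ((\<lambda>x. x \<bullet> S) ` A) - L) = Max ((\<lambda>x. x \<bullet> S) ` A) - D"
    using L D False by (simp add: field_simps)
  ultimately show ?thesis using False unfolding ah_potential_def L_def by simp
qed (simp add: ah_potential_def)

lemma ah_potential_antimono:
  fixes A :: "(real^'d) set"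
  assumes A: "finite A" and K: "card A \<ge> 2" and D: "0 \<le> D" "D \<le> D'"
  shows "ah_potential A D' S \<le> ah_potential A D S"
proof -
  define L where "L = ln (real (card A))"
  have L: "0 < L" unfolding L_def using K by simp
  have A': "A \<noteq> {}" using K by auto
  show ?thesis
  proof (cases "D = 0"; cases "D' = 0")
    assume "D = 0" "D' \<noteq> 0"
    hence "D' / L * ln ((\<Sum>x\<in>A. exp (L / D' * (x \<bullet> S))) / real (card A))
        \<le> D' / L * (L / D' * Max ((\<lambda>x. x \<bullet> S) ` A))"
      using ln_mean_exp_le_Max[OF A A', of "L / D'" "\<lambda>x. x \<bullet> S"] L D by (intro mult_left_mono) auto
    thus ?thesis using \<open>D = 0\<close> \<open>D' \<noteq> 0\<close> L unfolding ah_potential_def L_def by simp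
  next
    assume "D \<noteq> 0" "D' \<noteq> 0"
    hence "ln ((\<Sum>x\<in>A. exp (D / D' * (L / D * (x \<bullet> S)))) / real (card A))
        \<le> D / D' * ln ((\<Sum>x\<in>A. exp (L / D * (x \<bullet> S))) / real (card A))"
      using D by (intro ln_mean_exp_scale_le[OF A A']) auto
    hence "D' / L * ln ((\<Sum>x\<in>A. exp (L / D' * (x \<bullet> S))) / real (card A))
        \<le> D' / L * (D / D' * ln ((\<Sum>x\<in>A. exp (L / D * (x \<bullet> S))) / real (card A)))"
      using L D \<open>D \<noteq> 0\<close> by (intro mult_left_mono) auto
    thus ?thesis using \<open>D \<noteq> 0\<close> \<open>D' \<noteq> 0\<close> unfolding ah_potential_def L_def by simp
  qed (use D in \<open>auto simp: ah_potential_def\<close>)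
qed

lemma Max_inner_add_le:
  fixes A :: "(real^'d) set"
  assumes "finite A" "A \<noteq> {}"
  shows "Max ((\<lambda>x. x \<bullet> (S + g)) ` A) \<le> Max ((\<lambda>x. x \<bullet> S) ` A) + Max ((\<lambda>x. x \<bullet> g) ` A)"
  using assms by (subst Max_le_iff) (auto simp: inner_add_right intro: add_mono)

lemma ah_potential_step:
  fixes A :: "(real^'d) set"
  assumes A: "finite A" and K: "card A \<ge> 2" and D: "0 \<le> D"
  shows "ah_potential A D (S + g) - ah_potential A D S
    \<le> (\<Sum>x\<in>A. ah_q A S D x * (x \<bullet> g)) + ah_delta A (ah_q A S D) D g"
proof (cases "D = 0")
  case True
  thus ?thesis
    using Max_inner_add_le[OF A, of S g] K by (fastforce simp: ah_potential_def ah_delta_zero_eq)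
next
  case False
  define L where "L = ln (real (card A))"
  define \<eta> where "\<eta> = L / D"
  define W where "W T = (\<Sum>b\<in>A. exp (\<eta> * (b \<bullet> T)))" for T
  have W: "0 < W T" for T unfolding W_def using A K by (intro sum_pos) auto
  have K0: "0 < real (card A)" using K by simp
  have "(\<Sum>x\<in>A. ah_q A S D x * exp (\<eta> * (x \<bullet> g))) = W (S + g) / W S"
    unfolding W_def sum_divide_distrib
    by (rule sum.cong)
      (simp_all add: ah_q_def False L_def \<eta>_def W_def inner_add_right distrib_left exp_add)
  hence "(\<Sum>x\<in>A. ah_q A S D x * (x \<bullet> g)) + ah_delta A (ah_q A S D) D g
      = D / L * ln (W (S + g) / W S)"
    unfolding ah_delta_def using False by (simp add: L_def[symmetric] \<eta>_def[symmetric])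
  also have "\<dots> = D / L * ln (W (S + g) / real (card A)) - D / L * ln (W S / real (card A))"
    using W[of S] W[of "S + g"] K0 by (simp add: ln_div right_diff_distrib)
  also have "\<dots> = ah_potential A D (S + g) - ah_potential A D S"
    unfolding ah_potential_def using False by (simp add: L_def[symmetric] \<eta>_def[symmetric] W_def)
  finally show ?thesis by simp
qed

section \<open>AdaHedge on a fixed reward sequence\<close>

lemma le_sqrt_add_of_square_le:
  fixes x a c :: real
  assumes "0 \<le> x" "0 \<le> a" "0 \<le> c" and "x^2 \<le> a + c * x"
  shows "x \<le> sqrt a + c"
proof (rule ccontr)
  assume "\<not> x \<le> sqrt a + c"
  hence gt: "sqrt a + c < x" by simp
  moreover have "0 \<le> sqrt a" using assms(2) by simp
  ultimately have "0 < x" using assms(3) by linarith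
  have "(sqrt a + c) * x < x * x" using gt \<open>0 < x\<close> by (intro mult_strict_right_mono)
  moreover have "sqrt a * (sqrt a + c) \<le> sqrt a * x" using gt assms(2) by (intro mult_left_mono) auto
  ultimately show False
    using assms(2,4) mult_nonneg_nonneg[OF assms(3) real_sqrt_ge_zero[OF assms(2)]]
    by (simp add: algebra_simps power2_eq_square)
qed

locale adahedge_run =
  fixes A :: "(real^'d) set" and Y :: "nat \<Rightarrow> real^'d" and st :: "nat \<Rightarrow> (real^'d) \<times> real"
  assumes finite_A: "finite A" and card_A: "2 \<le> card A"
    and st_0: "st 0 = (0, 0)"
    and st_Suc: "\<And>t. st (Suc t) = (fst (st t) + Y (Suc t),
      snd (st t) + ah_delta A (ah_q A (fst (st t)) (snd (st t))) (snd (st t)) (Y (Suc t)))"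
begin

abbreviation cum :: "nat \<Rightarrow> real^'d" where "cum t \<equiv> fst (st t)"
abbreviation gap :: "nat \<Rightarrow> real" where "gap t \<equiv> snd (st t)"
abbreviation weights :: "nat \<Rightarrow> real^'d \<Rightarrow> real" where "weights t \<equiv> ah_q A (cum (t - 1)) (gap (t - 1))"

lemma weights_distribution: "distribution_on A (weights t)"
  using finite_A card_A by (intro ah_q_distribution) auto

lemma gap_nonneg: "0 \<le> gap t"
proof (induction t)
  case (Suc t)
  thus ?case
    using ah_delta_nonneg[OF finite_A weights_distribution[of "Suc t"] card_A Suc]
    by (simp add: st_Suc)
qed (simp add: st_0)

lemma gap_Suc: "gap (Suc t) = gap t + ah_delta A (weights (Suc t)) (gap t) (Y (Suc t))"
  by (simp add: st_Suc)

lemma gap_mono: "gap t \<le> gap (Suc t)"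
  using ah_delta_nonneg[OF finite_A weights_distribution[of "Suc t"] card_A gap_nonneg[of t]]
  by (simp add: gap_Suc)

lemma cum_eq: "cum t = (\<Sum>s=1..t. Y s)"
  by (induction t) (simp_all add: st_0 st_Suc add.commute)

lemma potential_le:
  "ah_potential A (gap t) (cum t) \<le> (\<Sum>s=1..t. \<Sum>x\<in>A. weights s x * (x \<bullet> Y s)) + gap t"
proof (induction t)
  case 0
  have "A \<noteq> {}" using card_A by auto
  hence "(\<lambda>x. x \<bullet> (0::real^'d)) ` A = {0}" by auto
  thus ?case by (simp add: st_0 ah_potential_def)
next
  case (Suc t)
  have "ah_potential A (gap (Suc t)) (cum (Suc t)) \<le> ah_potential A (gap t) (cum t + Y (Suc t))"
    using ah_potential_antimono[OF finite_A card_A gap_nonneg gap_mono] by (simp add: st_Suc)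
  also have "\<dots> \<le> ah_potential A (gap t) (cum t)
      + ((\<Sum>x\<in>A. weights (Suc t) x * (x \<bullet> Y (Suc t)))
        + ah_delta A (weights (Suc t)) (gap t) (Y (Suc t)))"
    using ah_potential_step[OF finite_A card_A gap_nonneg[of t], of "cum t" "Y (Suc t)"] by simp
  finally show ?case using Suc by (simp add: gap_Suc)
qed

lemma regret_le_twice_gap:
  "Max ((\<lambda>x. x \<bullet> cum t) ` A) - (\<Sum>s=1..t. \<Sum>x\<in>A. weights s x * (x \<bullet> Y s)) \<le> 2 * gap t"
  using ah_potential_ge_Max[OF finite_A card_A gap_nonneg[of t], of "cum t"] potential_le[of t]
  by simp

lemma gap_square_le:
  assumes B: "0 \<le> B"
    and range: "\<And>s x. s \<in> {1..t} \<Longrightarrow> x \<in> A \<Longrightarrow>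
      x \<bullet> Y s - (\<Sum>z\<in>A. weights s z * (z \<bullet> Y s)) \<le> B"
  shows "(gap t)^2 \<le> ln (real (card A)) * (\<Sum>s=1..t. \<Sum>x\<in>A. weights s x * (x \<bullet> Y s)^2)
     + (2/3 * ln (real (card A)) + 1) * B * gap t"
  using range
proof (induction t)
  case (Suc t)
  define L where "L = ln (real (card A))"
  define \<delta> where "\<delta> = ah_delta A (weights (Suc t)) (gap t) (Y (Suc t))"
  define v where "v = (\<Sum>x\<in>A. weights (Suc t) x * (x \<bullet> Y (Suc t))^2)"
  define V where "V = (\<Sum>s=1..t. \<Sum>x\<in>A. weights s x * (x \<bullet> Y s)^2)"
  have range': "x \<bullet> Y (Suc t) - (\<Sum>z\<in>A. weights (Suc t) z * (z \<bullet> Y (Suc t))) \<le> B" if "x \<in> A" for x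
    using Suc.prems[of "Suc t" x] that by simp
  have "2 * gap t * \<delta> \<le> L * v + 2/3 * L * B * \<delta>"
    unfolding \<delta>_def v_def L_def
    by (rule ah_delta_bernstein[OF finite_A weights_distribution card_A gap_nonneg B range'])
  moreover have "\<delta> * \<delta> \<le> B * \<delta>"
    using ah_delta_nonneg[OF finite_A weights_distribution[of "Suc t"] card_A gap_nonneg[of t]]
      ah_delta_le[OF finite_A weights_distribution[of "Suc t"] card_A gap_nonneg[of t] range']
    unfolding \<delta>_def by (intro mult_right_mono) auto
  moreover have "(gap t)^2 \<le> L * V + (2/3 * L + 1) * B * gap t"
    using Suc by (simp add: L_def V_def)
  ultimately have "(gap t)^2 + 2 * gap t * \<delta> + \<delta> * \<delta>
      \<le> (L * V + (2/3 * L + 1) * B * gap t) + (L * v + 2/3 * L * B * \<delta>) + B * \<delta>"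
    by linarith
  also have "\<dots> = L * (V + v) + (2/3 * L + 1) * B * (gap t + \<delta>)"
    by (simp add: algebra_simps)
  also have "V + v = (\<Sum>s=1..Suc t. \<Sum>x\<in>A. weights s x * (x \<bullet> Y s)^2)"
    by (simp add: V_def v_def)
  finally show ?case by (simp add: gap_Suc \<delta>_def L_def power2_eq_square algebra_simps)
qed (simp add: st_0)

lemma gap_le:
  assumes "0 \<le> B"
    and "\<And>s x. s \<in> {1..t} \<Longrightarrow> x \<in> A \<Longrightarrow> x \<bullet> Y s - (\<Sum>z\<in>A. weights s z * (z \<bullet> Y s)) \<le> B"
  shows "gap t \<le> sqrt (ln (real (card A)) * (\<Sum>s=1..t. \<Sum>x\<in>A. weights s x * (x \<bullet> Y s)^2))
     + (2/3 * ln (real (card A)) + 1) * B"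
proof (rule le_sqrt_add_of_square_le[OF gap_nonneg _ _ gap_square_le[OF assms]])
  have "0 \<le> (\<Sum>s=1..t. \<Sum>x\<in>A. weights s x * (x \<bullet> Y s)^2)"
    using distribution_onD(1)[OF weights_distribution] by (intro sum_nonneg) auto
  thus "0 \<le> ln (real (card A)) * (\<Sum>s=1..t. \<Sum>x\<in>A. weights s x * (x \<bullet> Y s)^2)"
    using card_A by simp
  show "0 \<le> (2/3 * ln (real (card A)) + 1) * B" using card_A assms(1) by simp
qed

end

section \<open>Expectations over action paths\<close>

lemma sum_PiE_insert:
  assumes "x \<notin> S"
  shows "(\<Sum>f\<in>Pi\<^sub>E (insert x S) T. h f) = (\<Sum>g\<in>Pi\<^sub>E S T. \<Sum>y\<in>T x. h (g(x := y)))"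
proof -
  have "(\<Sum>f\<in>Pi\<^sub>E (insert x S) T. h f) = (\<Sum>(y, g)\<in>T x \<times> Pi\<^sub>E S T. h (g(x := y)))"
    unfolding PiE_insert_eq
    by (subst sum.reindex[OF inj_combinator[OF assms]]) (simp add: case_prod_unfold)
  also have "\<dots> = (\<Sum>y\<in>T x. \<Sum>g\<in>Pi\<^sub>E S T. h (g(x := y)))"
    by (simp add: sum.cartesian_product)
  finally show ?thesis by (simp add: sum.swap[of _ "T x"])
qed

locale trajectory_kernel =
  fixes A :: "'a set" and P :: "nat \<Rightarrow> (nat \<Rightarrow> 'a) \<Rightarrow> 'a \<Rightarrow> real"
  assumes causal: "\<And>t X X'. (\<forall>s<t. X s = X' s) \<Longrightarrow> P t X = P t X'"
    and kernel_nonneg: "\<And>t X a. a \<in> A \<Longrightarrow> 0 \<le> P t X a"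
    and kernel_sum: "\<And>t X. (\<Sum>a\<in>A. P t X a) = 1"
begin

definition path_expectation :: "nat \<Rightarrow> ((nat \<Rightarrow> 'a) \<Rightarrow> real) \<Rightarrow> real" where
  "path_expectation T F = (\<Sum>X\<in>Pi\<^sub>E {1..T} (\<lambda>_. A). (\<Prod>t\<in>{1..T}. P t X (X t)) * F X)"

lemma path_expectation_Suc:
  "path_expectation (Suc T) F
    = path_expectation T (\<lambda>X. \<Sum>a\<in>A. P (Suc T) X a * F (X(Suc T := a)))"
proof -
  have weight: "(\<Prod>t\<in>{1..Suc T}. P t (X(Suc T := a)) ((X(Suc T := a)) t))
      = P (Suc T) X a * (\<Prod>t\<in>{1..T}. P t X (X t))" for X a
  proof -
    have "P t (X(Suc T := a)) = P t X" if "t \<le> Suc T" for t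
      using that by (intro causal) auto
    thus ?thesis by (simp add: atLeastAtMostSuc_conv prod.insert)
  qed
  have iv: "{1..Suc T} = insert (Suc T) {1..T}" by auto
  have "path_expectation (Suc T) F = (\<Sum>X\<in>Pi\<^sub>E {1..T} (\<lambda>_. A). \<Sum>a\<in>A.
      (\<Prod>t\<in>{1..Suc T}. P t (X(Suc T := a)) ((X(Suc T := a)) t)) * F (X(Suc T := a)))"
    unfolding path_expectation_def by (rule sum_PiE_insert[of "Suc T" "{1..T}", folded iv]) simp
  also have "\<dots> = path_expectation T (\<lambda>X. \<Sum>a\<in>A. P (Suc T) X a * F (X(Suc T := a)))"
    unfolding path_expectation_def weight by (simp add: sum_distrib_left ac_simps)
  finally show ?thesis .
qed

lemma path_expectation_truncate:
  assumes F: "\<And>X X'. (\<forall>s\<le>t. X s = X' s) \<Longrightarrow> F X = F X'" and "t \<le> T"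
  shows "path_expectation T F = path_expectation t F"
  using \<open>t \<le> T\<close>
proof (induction T rule: dec_induct)
  case (step T)
  have "F (X(Suc T := a)) = F X" for X a
    using step.hyps by (intro F) auto
  hence "(\<Sum>a\<in>A. P (Suc T) X a * F (X(Suc T := a))) = F X" for X
    by (simp add: sum_distrib_right[symmetric] kernel_sum)
  thus ?case by (simp add: path_expectation_Suc step.IH)
qed simp

lemma path_expectation_const: "path_expectation T (\<lambda>_. c) = c"
  using path_expectation_truncate[of 0 "\<lambda>_. c" T] by (simp add: path_expectation_def)

lemma path_expectation_add:
  "path_expectation T (\<lambda>X. F X + G X) = path_expectation T F + path_expectation T G"
  unfolding path_expectation_def by (simp add: algebra_simps sum.distrib)

lemma path_expectation_diff:
  "path_expectation T (\<lambda>X. F X - G X) = path_expectation T F - path_expectation T G"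
  unfolding path_expectation_def by (simp add: algebra_simps sum_subtractf)

lemma path_expectation_cmult:
  "path_expectation T (\<lambda>X. c * F X) = c * path_expectation T F"
  unfolding path_expectation_def by (simp add: sum_distrib_left mult.left_commute)

lemma path_expectation_sum:
  "path_expectation T (\<lambda>X. \<Sum>i\<in>I. F i X) = (\<Sum>i\<in>I. path_expectation T (F i))"
  unfolding path_expectation_def sum_distrib_left by (rule sum.swap)

lemma path_expectation_mono:
  assumes "\<And>X. X \<in> Pi\<^sub>E {1..T} (\<lambda>_. A) \<Longrightarrow> F X \<le> G X"
  shows "path_expectation T F \<le> path_expectation T G"
  unfolding path_expectation_def
  using assms kernel_nonneg by (intro sum_mono mult_left_mono prod_nonneg) (auto simp: PiE_iff)

text \<open>The tower property: averaging out the action of round \<open>t\<close> in a predictable \<open>G\<close>.\<close>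

lemma path_expectation_round:
  assumes G: "\<And>X X' a. (\<forall>s<t. X s = X' s) \<Longrightarrow> G X a = G X' a" and t: "1 \<le> t" "t \<le> T"
  shows "path_expectation T (\<lambda>X. G X (X t)) = path_expectation T (\<lambda>X. \<Sum>a\<in>A. P t X a * G X a)"
proof -
  obtain t' where t': "t = Suc t'" using t by (cases t) auto
  have past: "\<forall>s<t. (X(t := b)) s = X s" for X b by simp
  have "path_expectation T (\<lambda>X. G X (X t)) = path_expectation t (\<lambda>X. G X (X t))"
    using G t by (intro path_expectation_truncate) (auto simp: le_less)
  also have "\<dots> = path_expectation t' (\<lambda>X. \<Sum>a\<in>A. P t X a * G X a)"
    unfolding t' path_expectation_Suc by (simp add: G[OF past] flip: t')
  also have "\<dots> = path_expectation t (\<lambda>X. \<Sum>a\<in>A. P t X a * G X a)"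
    unfolding t' path_expectation_Suc
    by (simp add: G[OF past] causal[OF past] sum_distrib_right[symmetric] kernel_sum flip: t')
  also have "\<dots> = path_expectation T (\<lambda>X. \<Sum>a\<in>A. P t X a * G X a)"
  proof (rule path_expectation_truncate[symmetric, OF _ t(2)])
    fix X X' :: "nat \<Rightarrow> 'a" assume "\<forall>s\<le>t. X s = X' s"
    hence "\<forall>s<t. X s = X' s" by simp
    thus "(\<Sum>a\<in>A. P t X a * G X a) = (\<Sum>a\<in>A. P t X' a * G X' a)"
      using G[of X X'] causal[of t X X'] by simp
  qed
  finally show ?thesis .
qed

text \<open>Jensen's inequality for the square root, via \<open>\<surd>z \<le> (z / b + b) / 2\<close>.\<close>

lemma path_expectation_sqrt_le:
  assumes nonneg: "\<And>X. 0 \<le> F X" and bound: "path_expectation T F \<le> b^2" and "0 < b"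
  shows "path_expectation T (\<lambda>X. sqrt (F X)) \<le> b"
proof -
  have "sqrt z \<le> z / (2 * b) + b / 2" if "0 \<le> z" for z
  proof -
    have "0 \<le> (sqrt z - b)^2" by simp
    thus ?thesis using that \<open>0 < b\<close> by (simp add: power2_diff field_simps power2_eq_square)
  qed
  hence "path_expectation T (\<lambda>X. sqrt (F X)) \<le> path_expectation T (\<lambda>X. F X / (2 * b) + b / 2)"
    using nonneg by (intro path_expectation_mono) simp
  also have "\<dots> = path_expectation T F / (2 * b) + b / 2"
    using path_expectation_cmult[of T "1 / (2 * b)" F]
    by (simp add: path_expectation_add path_expectation_const)
  also have "\<dots> \<le> b^2 / (2 * b) + b / 2"
    using bound \<open>0 < b\<close> by (simp add: divide_right_mono)
  also have "\<dots> = b" using \<open>0 < b\<close> by (simp add: power2_eq_square)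
  finally show ?thesis .
qed

end

section \<open>The bandit algorithm\<close>

lemma ah_state_causal:
  "(\<forall>s\<in>{1..t}. X s = X' s) \<Longrightarrow> ah_state A \<pi> \<gamma> y X t = ah_state A \<pi> \<gamma> y X' t"
  by (induction t) (auto simp: Let_def)

lemma ah_pt_causal:
  "(\<forall>s<t. X s = X' s) \<Longrightarrow> ah_pt A \<pi> \<gamma> y X t = ah_pt A \<pi> \<gamma> y X' t"
proof -
  assume "\<forall>s<t. X s = X' s"
  hence "ah_state A \<pi> \<gamma> y X (t - 1) = ah_state A \<pi> \<gamma> y X' (t - 1)"
    by (intro ah_state_causal) auto
  thus ?thesis unfolding ah_pt_def by simp
qed

lemma ah_state_Suc_eq:
  "ah_state A \<pi> \<gamma> y X (Suc t) =
    (fst (ah_state A \<pi> \<gamma> y X t) + ah_yhat A (ah_pt A \<pi> \<gamma> y X (Suc t)) (X (Suc t)) (y (Suc t)),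
     snd (ah_state A \<pi> \<gamma> y X t)
     + ah_delta A (ah_q A (fst (ah_state A \<pi> \<gamma> y X t)) (snd (ah_state A \<pi> \<gamma> y X t)))
        (snd (ah_state A \<pi> \<gamma> y X t)) (ah_yhat A (ah_pt A \<pi> \<gamma> y X (Suc t)) (X (Suc t)) (y (Suc t))))"
proof -
  obtain S D where SD: "ah_state A \<pi> \<gamma> y X t = (S, D)" by (cases "ah_state A \<pi> \<gamma> y X t")
  have "ah_pt A \<pi> \<gamma> y X (Suc t) = ah_p A \<pi> (\<gamma> (Suc t)) S D"
    by (simp add: ah_pt_def fun_eq_iff SD)
  thus ?thesis by (simp add: Let_def SD)
qed

text \<open>\<open>\<pi>\<close> is a G-optimal (Kiefer-Wolfowitz) design for \<open>A\<close>.\<close>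

locale exploration =
  fixes A :: "(real^'d) set" and \<pi> :: "real^'d \<Rightarrow> real"
  assumes finite_A: "finite A" and \<pi>_distribution: "distribution_on A \<pi>"
    and invertible_\<pi>: "invertible (Mmat A \<pi>)"
    and design: "Max ((\<lambda>x. x \<bullet> (matrix_inv (Mmat A \<pi>) *v x)) ` A) = real CARD('d)"
begin

abbreviation mix :: "real \<Rightarrow> (real^'d \<Rightarrow> real) \<Rightarrow> real^'d \<Rightarrow> real" where
  "mix g q \<equiv> \<lambda>a. (1 - g) * q a + g * \<pi> a"

context
  fixes g :: real and q :: "real^'d \<Rightarrow> real"
  assumes g: "0 < g" "g \<le> 1/2" and q: "distribution_on A q"
begin

lemma mix_nonneg: "a \<in> A \<Longrightarrow> 0 \<le> mix g q a"
  using g distribution_onD(1)[OF q] distribution_onD(1)[OF \<pi>_distribution] by simp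

lemma mix_dominates_\<pi>: "a \<in> A \<Longrightarrow> g * \<pi> a \<le> mix g q a"
  using g distribution_onD(1)[OF q] by simp

lemma mix_dominates_weights:
  assumes "a \<in> A"
  shows "q a \<le> 2 * mix g q a"
proof -
  have "g * q a \<le> 1/2 * q a"
    using g distribution_onD(1)[OF q assms] by (intro mult_right_mono) auto
  moreover have "0 \<le> g * \<pi> a" using g distribution_onD(1)[OF \<pi>_distribution assms] by simp
  ultimately show ?thesis by (simp add: algebra_simps)
qed

lemma invertible_Mmat_mix: "invertible (Mmat A (mix g q))"
  using distribution_onD(1)[OF \<pi>_distribution]
  by (intro invertible_Mmat_if_dominates[OF finite_A g(1) mix_dominates_\<pi> _ invertible_\<pi>])

lemma inner_matrix_inv_mix_le:
  assumes "x \<in> A"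
  shows "x \<bullet> (matrix_inv (Mmat A (mix g q)) *v x) \<le> real CARD('d) / g"
proof -
  have "x \<bullet> (matrix_inv (Mmat A (mix g q)) *v x) \<le> (x \<bullet> (matrix_inv (Mmat A \<pi>) *v x)) / g"
    using distribution_onD(1)[OF \<pi>_distribution] invertible_Mmat_mix
    by (intro inner_matrix_inv_Mmat_le_if_dominates[OF finite_A g(1) mix_dominates_\<pi> _ invertible_\<pi>])
  also have "\<dots> \<le> real CARD('d) / g"
    unfolding design[symmetric] using finite_A assms g by (intro divide_right_mono Max_ge) auto
  finally show ?thesis .
qed

lemma abs_inner_mix_estimate_le:
  assumes "x \<in> A" "a \<in> A" and "\<bar>a \<bullet> v\<bar> \<le> c"
  shows "\<bar>x \<bullet> ah_yhat A (mix g q) a v\<bar> \<le> c * real CARD('d) / g"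
proof -
  let ?B = "matrix_inv (Mmat A (mix g q))"
  have "\<bar>x \<bullet> (?B *v a)\<bar> \<le> (x \<bullet> (?B *v x) + a \<bullet> (?B *v a)) / 2"
    by (rule abs_inner_matrix_inv_Mmat_le[OF finite_A invertible_Mmat_mix mix_nonneg])
  also have "\<dots> \<le> real CARD('d) / g"
    using inner_matrix_inv_mix_le[OF assms(1)] inner_matrix_inv_mix_le[OF assms(2)]
    by (simp add: add_divide_distrib)
  finally have "\<bar>a \<bullet> v\<bar> * \<bar>x \<bullet> (?B *v a)\<bar> \<le> c * (real CARD('d) / g)"
    using assms(3) by (intro mult_mono) auto
  thus ?thesis unfolding ah_yhat_def by (simp add: abs_mult)
qed

lemma mix_reward_ge:
  assumes "\<And>a. a \<in> A \<Longrightarrow> m \<le> a \<bullet> v \<and> a \<bullet> v \<le> M"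
  shows "(\<Sum>a\<in>A. q a * (a \<bullet> v)) - g * (M - m) \<le> (\<Sum>a\<in>A. mix g q a * (a \<bullet> v))"
proof -
  have "(\<Sum>a\<in>A. q a * (a \<bullet> v)) \<le> M" and "m \<le> (\<Sum>a\<in>A. \<pi> a * (a \<bullet> v))"
    using assms
    by (auto intro: distribution_on_mean_le[OF q] distribution_on_mean_ge[OF \<pi>_distribution])
  hence "g * ((\<Sum>a\<in>A. q a * (a \<bullet> v)) - (\<Sum>a\<in>A. \<pi> a * (a \<bullet> v))) \<le> g * (M - m)"
    using g by (intro mult_left_mono) auto
  thus ?thesis by (simp add: algebra_simps sum.distrib sum_subtractf sum_distrib_left)
qed

lemma estimate_second_moment_le:
  assumes bound: "\<And>a. a \<in> A \<Longrightarrow> \<bar>a \<bullet> v\<bar> \<le> c"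
  shows "(\<Sum>a\<in>A. mix g q a * (\<Sum>x\<in>A. q x * (x \<bullet> ah_yhat A (mix g q) a v)^2))
    \<le> 2 * real CARD('d) * c^2"
proof -
  let ?p = "mix g q" let ?B = "matrix_inv (Mmat A (mix g q))"
  have "(\<Sum>a\<in>A. ?p a * (\<Sum>x\<in>A. q x * (x \<bullet> ah_yhat A ?p a v)^2))
      = (\<Sum>x\<in>A. q x * (\<Sum>a\<in>A. ?p a * ((a \<bullet> v)^2 * (x \<bullet> (?B *v a))^2)))"
    unfolding ah_yhat_def
    by (simp add: sum_distrib_left power_mult_distrib ac_simps) (rule sum.swap)
  also have "\<dots> \<le> (\<Sum>x\<in>A. q x * (\<Sum>a\<in>A. ?p a * (c^2 * (x \<bullet> (?B *v a))^2)))"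
    using power_mono[OF bound abs_ge_zero, of _ 2] distribution_onD(1)[OF q] mix_nonneg
    by (intro sum_mono mult_left_mono mult_right_mono) auto
  also have "\<dots> = c^2 * (\<Sum>x\<in>A. q x * (x \<bullet> (?B *v x)))"
    by (simp add: sum_distrib_left mult.left_commute
        sum_inner_matrix_inv_Mmat_square[OF finite_A invertible_Mmat_mix, symmetric])
  also have "\<dots> \<le> c^2 * (\<Sum>x\<in>A. 2 * (?p x * (x \<bullet> (?B *v x))))"
    using mix_dominates_weights
      inner_matrix_inv_Mmat_nonneg[OF finite_A invertible_Mmat_mix mix_nonneg]
    by (intro mult_left_mono sum_mono) (auto simp: mult.assoc[symmetric] intro: mult_right_mono)
  also have "\<dots> = 2 * real CARD('d) * c^2"
    using sum_inner_matrix_inv_Mmat_eq_dim[OF invertible_Mmat_mix]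
    by (simp add: sum_distrib_left[symmetric])
  finally show ?thesis .
qed

end

end

locale adahedge_bandit = exploration A \<pi>
  for A :: "(real^'d) set" and \<pi> :: "real^'d \<Rightarrow> real" +
  fixes y :: "nat \<Rightarrow> real^'d" and m M :: real and \<gamma> :: "nat \<Rightarrow> real"
  assumes card_A: "2 \<le> card A"
    and m_less_M: "m < M" and m_nonpos: "m \<le> 0" and M_nonneg: "0 \<le> M"
    and rewards: "\<And>t x. 1 \<le> t \<Longrightarrow> x \<in> A \<Longrightarrow> m \<le> x \<bullet> y t \<and> x \<bullet> y t \<le> M"
    and gamma_nonneg: "\<And>t. 0 \<le> \<gamma> t" and gamma_le_half: "\<And>t. \<gamma> t \<le> 1/2"
    and gamma_pos: "\<And>t. 1 \<le> t \<Longrightarrow> 0 < \<gamma> t"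
    and gamma_antimono: "\<And>s t. 1 \<le> s \<Longrightarrow> s \<le> t \<Longrightarrow> \<gamma> t \<le> \<gamma> s"
begin

abbreviation state :: "(nat \<Rightarrow> real^'d) \<Rightarrow> nat \<Rightarrow> (real^'d) \<times> real" where
  "state X \<equiv> ah_state A \<pi> \<gamma> y X"

abbreviation weights :: "(nat \<Rightarrow> real^'d) \<Rightarrow> nat \<Rightarrow> real^'d \<Rightarrow> real" where
  "weights X t \<equiv> ah_q A (fst (state X (t - 1))) (snd (state X (t - 1)))"

abbreviation estimate :: "(nat \<Rightarrow> real^'d) \<Rightarrow> nat \<Rightarrow> real^'d" where
  "estimate X t \<equiv> ah_yhat A (ah_pt A \<pi> \<gamma> y X t) (X t) (y t)"

lemma weights_distribution: "distribution_on A (weights X t)"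
  using finite_A card_A by (intro ah_q_distribution) auto

lemma ah_pt_eq_mix: "ah_pt A \<pi> \<gamma> y X t = mix (\<gamma> t) (weights X t)"
  by (simp add: ah_pt_def ah_p_def fun_eq_iff)

sublocale trajectory_kernel A "\<lambda>t X. ah_pt A \<pi> \<gamma> y X t"
proof
  fix t X a assume "a \<in> A"
  thus "0 \<le> ah_pt A \<pi> \<gamma> y X t a"
    using gamma_nonneg[of t] gamma_le_half[of t] distribution_onD(1)[OF weights_distribution]
      distribution_onD(1)[OF \<pi>_distribution] by (simp add: ah_pt_eq_mix)
next
  fix t X
  show "(\<Sum>a\<in>A. ah_pt A \<pi> \<gamma> y X t a) = 1"
    using distribution_onD(2)[OF weights_distribution] distribution_onD(2)[OF \<pi>_distribution]
    by (simp add: ah_pt_eq_mix sum.distrib sum_distrib_left[symmetric])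
qed (rule ah_pt_causal)

lemma adahedge_run: "adahedge_run A (estimate X) (state X)"
  by unfold_locales (simp_all add: finite_A card_A ah_state_Suc_eq del: ah_state.simps(2))

lemma weights_causal:
  assumes "\<forall>s<t. X s = X' s"
  shows "weights X t = weights X' t"
proof -
  have "state X (t - 1) = state X' (t - 1)" using assms by (intro ah_state_causal) auto
  thus ?thesis by simp
qed

lemma abs_rewards_le: "1 \<le> t \<Longrightarrow> a \<in> A \<Longrightarrow> \<bar>a \<bullet> y t\<bar> \<le> M - m"
  using rewards[of t a] m_nonpos M_nonneg by auto

lemma abs_inner_estimate_le:
  assumes "1 \<le> t" "x \<in> A" "X t \<in> A"
  shows "\<bar>x \<bullet> estimate X t\<bar> \<le> (M - m) * real CARD('d) / \<gamma> t"
  unfolding ah_pt_eq_mix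
  using assms abs_rewards_le[OF assms(1)] gamma_pos[OF assms(1)] gamma_le_half weights_distribution
  by (intro abs_inner_mix_estimate_le) auto

text \<open>Unbiasedness of the estimates, tested against any predictable vector.\<close>

lemma expected_inner_estimate:
  assumes u: "\<And>X X'. (\<forall>s<t. X s = X' s) \<Longrightarrow> u X = u X'" and t: "1 \<le> t" "t \<le> T"
  shows "path_expectation T (\<lambda>X. u X \<bullet> estimate X t) = path_expectation T (\<lambda>X. u X \<bullet> y t)"
proof -
  have "path_expectation T (\<lambda>X. u X \<bullet> estimate X t)
      = path_expectation T (\<lambda>X. \<Sum>a\<in>A.
          ah_pt A \<pi> \<gamma> y X t a * (u X \<bullet> ah_yhat A (ah_pt A \<pi> \<gamma> y X t) a (y t)))"
  proof (rule path_expectation_round[OF _ t])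
    fix X X' :: "nat \<Rightarrow> real^'d" and a assume "\<forall>s<t. X s = X' s"
    thus "u X \<bullet> ah_yhat A (ah_pt A \<pi> \<gamma> y X t) a (y t)
        = u X' \<bullet> ah_yhat A (ah_pt A \<pi> \<gamma> y X' t) a (y t)"
      using u[of X X'] ah_pt_causal[of t X X'] by simp
  qed
  also have "\<dots> = path_expectation T (\<lambda>X. u X \<bullet> y t)"
  proof -
    have "(\<Sum>a\<in>A. ah_pt A \<pi> \<gamma> y X t a *\<^sub>R ah_yhat A (ah_pt A \<pi> \<gamma> y X t) a (y t)) = y t" for X
      unfolding ah_pt_eq_mix ah_yhat_def
      using gamma_pos[OF t(1)] gamma_le_half weights_distribution
      by (intro sum_Mmat_estimate[OF finite_A] invertible_Mmat_mix)
    from arg_cong[OF this, of "\<lambda>v. u X \<bullet> v" for X]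
    show ?thesis by (simp add: inner_sum_right)
  qed
  finally show ?thesis .
qed

lemma expected_best_le:
  "Max ((\<lambda>x. \<Sum>t=1..T. x \<bullet> y t) ` A)
    \<le> path_expectation T (\<lambda>X. Max ((\<lambda>x. x \<bullet> fst (state X T)) ` A))"
proof -
  have "(\<Sum>t=1..T. x \<bullet> y t) \<le> path_expectation T (\<lambda>X. Max ((\<lambda>x. x \<bullet> fst (state X T)) ` A))"
    if "x \<in> A" for x
  proof -
    have "(\<Sum>t=1..T. x \<bullet> y t) = (\<Sum>t=1..T. path_expectation T (\<lambda>X. x \<bullet> estimate X t))"
    proof (rule sum.cong[OF refl])
      fix t assume "t \<in> {1..T}"
      thus "x \<bullet> y t = path_expectation T (\<lambda>X. x \<bullet> estimate X t)"
        using expected_inner_estimate[of t "\<lambda>_. x" T] by (simp add: path_expectation_const)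
    qed
    also have "\<dots> = path_expectation T (\<lambda>X. x \<bullet> fst (state X T))"
      by (simp add: adahedge_run.cum_eq[OF adahedge_run] inner_sum_right path_expectation_sum)
    also have "\<dots> \<le> path_expectation T (\<lambda>X. Max ((\<lambda>x. x \<bullet> fst (state X T)) ` A))"
      using finite_A that by (intro path_expectation_mono) auto
    finally show ?thesis .
  qed
  thus ?thesis using finite_A card_A by (subst Max_le_iff) auto
qed

lemma expected_weighted_estimate:
  assumes "1 \<le> t" "t \<le> T"
  shows "path_expectation T (\<lambda>X. \<Sum>x\<in>A. weights X t x * (x \<bullet> estimate X t))
    = path_expectation T (\<lambda>X. \<Sum>x\<in>A. weights X t x * (x \<bullet> y t))"
proof -
  have "(\<Sum>x\<in>A. weights X t x *\<^sub>R x) = (\<Sum>x\<in>A. weights X' t x *\<^sub>R x)"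
    if "\<forall>s<t. X s = X' s" for X X'
    using weights_causal[OF that] by simp
  from expected_inner_estimate[OF this assms] show ?thesis by (simp add: inner_sum_left)
qed

lemma expected_reward_round_ge:
  assumes "1 \<le> t" "t \<le> T"
  shows "path_expectation T (\<lambda>X. \<Sum>x\<in>A. weights X t x * (x \<bullet> y t)) - \<gamma> t * (M - m)
    \<le> path_expectation T (\<lambda>X. X t \<bullet> y t)"
proof -
  have "path_expectation T (\<lambda>X. \<Sum>x\<in>A. weights X t x * (x \<bullet> y t)) - \<gamma> t * (M - m)
      = path_expectation T (\<lambda>X. (\<Sum>x\<in>A. weights X t x * (x \<bullet> y t)) - \<gamma> t * (M - m))"
    by (simp add: path_expectation_diff path_expectation_const)
  also have "\<dots> \<le> path_expectation T (\<lambda>X. \<Sum>a\<in>A. ah_pt A \<pi> \<gamma> y X t a * (a \<bullet> y t))"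
  proof (rule path_expectation_mono)
    fix X
    show "(\<Sum>x\<in>A. weights X t x * (x \<bullet> y t)) - \<gamma> t * (M - m)
        \<le> (\<Sum>a\<in>A. ah_pt A \<pi> \<gamma> y X t a * (a \<bullet> y t))"
      using mix_reward_ge[OF gamma_pos[OF assms(1)] gamma_le_half weights_distribution
          rewards[OF assms(1)]]
      by (simp add: ah_pt_eq_mix)
  qed
  also have "\<dots> = path_expectation T (\<lambda>X. X t \<bullet> y t)"
    using assms by (intro path_expectation_round[symmetric]) auto
  finally show ?thesis .
qed

lemma expected_mix_loss_le:
  "path_expectation T (\<lambda>X. \<Sum>t=1..T. \<Sum>x\<in>A. weights X t x * (x \<bullet> estimate X t))
    - (M - m) * (\<Sum>t=1..T. \<gamma> t) \<le> ah_expected_reward A \<pi> \<gamma> y T"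
proof -
  have "path_expectation T (\<lambda>X. \<Sum>t=1..T. \<Sum>x\<in>A. weights X t x * (x \<bullet> estimate X t))
      = (\<Sum>t=1..T. path_expectation T (\<lambda>X. \<Sum>x\<in>A. weights X t x * (x \<bullet> estimate X t)))"
    by (rule path_expectation_sum)
  also have "\<dots> = (\<Sum>t=1..T. path_expectation T (\<lambda>X. \<Sum>x\<in>A. weights X t x * (x \<bullet> y t)))"
    by (intro sum.cong refl expected_weighted_estimate) auto
  finally have "path_expectation T (\<lambda>X. \<Sum>t=1..T. \<Sum>x\<in>A. weights X t x * (x \<bullet> estimate X t))
      - (M - m) * (\<Sum>t=1..T. \<gamma> t)
    = (\<Sum>t=1..T. path_expectation T (\<lambda>X. \<Sum>x\<in>A. weights X t x * (x \<bullet> y t)) - \<gamma> t * (M - m))"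
    by (simp add: sum_subtractf sum_distrib_left mult.commute)
  also have "\<dots> \<le> (\<Sum>t=1..T. path_expectation T (\<lambda>X. X t \<bullet> y t))"
    by (intro sum_mono expected_reward_round_ge) auto
  also have "\<dots> = path_expectation T (\<lambda>X. \<Sum>t=1..T. X t \<bullet> y t)"
    by (rule path_expectation_sum[symmetric])
  also have "\<dots> = ah_expected_reward A \<pi> \<gamma> y T"
    by (simp add: ah_expected_reward_def path_expectation_def)
  finally show ?thesis .
qed

lemma expected_variance_le:
  assumes "1 \<le> t" "t \<le> T"
  shows "path_expectation T (\<lambda>X. \<Sum>x\<in>A. weights X t x * (x \<bullet> estimate X t)^2)
    \<le> 2 * real CARD('d) * (M - m)^2"
proof -
  have "path_expectation T (\<lambda>X. \<Sum>x\<in>A. weights X t x * (x \<bullet> estimate X t)^2)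
    = path_expectation T (\<lambda>X. \<Sum>a\<in>A. ah_pt A \<pi> \<gamma> y X t a *
        (\<Sum>x\<in>A. weights X t x * (x \<bullet> ah_yhat A (ah_pt A \<pi> \<gamma> y X t) a (y t))^2))"
  proof (rule path_expectation_round[OF _ assms])
    fix X X' :: "nat \<Rightarrow> real^'d" and a assume "\<forall>s<t. X s = X' s"
    thus "(\<Sum>x\<in>A. weights X t x * (x \<bullet> ah_yhat A (ah_pt A \<pi> \<gamma> y X t) a (y t))^2)
        = (\<Sum>x\<in>A. weights X' t x * (x \<bullet> ah_yhat A (ah_pt A \<pi> \<gamma> y X' t) a (y t))^2)"
      using weights_causal[of t X X'] ah_pt_causal[of t X X'] by simp
  qed
  also have "\<dots> \<le> path_expectation T (\<lambda>X. 2 * real CARD('d) * (M - m)^2)"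
  proof (rule path_expectation_mono)
    fix X
    show "(\<Sum>a\<in>A. ah_pt A \<pi> \<gamma> y X t a *
        (\<Sum>x\<in>A. weights X t x * (x \<bullet> ah_yhat A (ah_pt A \<pi> \<gamma> y X t) a (y t))^2))
      \<le> 2 * real CARD('d) * (M - m)^2"
      using estimate_second_moment_le[OF gamma_pos[OF assms(1)] gamma_le_half weights_distribution
          abs_rewards_le[OF assms(1)]]
      by (simp add: ah_pt_eq_mix)
  qed
  finally show ?thesis by (simp add: path_expectation_const)
qed

lemma path_regret_le:
  assumes X: "X \<in> Pi\<^sub>E {1..T} (\<lambda>_. A)" and T: "1 \<le> T"
  defines "L \<equiv> ln (real (card A))" and "B \<equiv> 2 * ((M - m) * real CARD('d) / \<gamma> T)"
  shows "Max ((\<lambda>x. x \<bullet> fst (state X T)) ` A) - (\<Sum>t=1..T. \<Sum>x\<in>A. weights X t x * (x \<bullet> estimate X t))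
    \<le> 2 * sqrt (L * (\<Sum>t=1..T. \<Sum>x\<in>A. weights X t x * (x \<bullet> estimate X t)^2))
      + 2 * ((2/3 * L + 1) * B)"
proof -
  interpret run: adahedge_run A "estimate X" "state X" by (rule adahedge_run)
  have bound: "\<bar>z \<bullet> estimate X s\<bar> \<le> (M - m) * real CARD('d) / \<gamma> T" if "s \<in> {1..T}" "z \<in> A" for s z
  proof -
    have "\<bar>z \<bullet> estimate X s\<bar> \<le> (M - m) * real CARD('d) / \<gamma> s"
      using that X by (intro abs_inner_estimate_le) (auto simp: PiE_iff)
    also have "\<dots> \<le> (M - m) * real CARD('d) / \<gamma> T"
      using that m_less_M gamma_pos gamma_antimono
      by (intro divide_left_mono mult_nonneg_nonneg mult_pos_pos) auto
    finally show ?thesis .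
  qed
  have "x \<bullet> estimate X s - (\<Sum>z\<in>A. weights X s z * (z \<bullet> estimate X s)) \<le> B"
    if "s \<in> {1..T}" "x \<in> A" for s x
  proof -
    have "- ((M - m) * real CARD('d) / \<gamma> T) \<le> (\<Sum>z\<in>A. weights X s z * (z \<bullet> estimate X s))"
      using bound[OF that(1)]
      by (intro distribution_on_mean_ge[OF weights_distribution]) (force simp: abs_le_iff)
    thus ?thesis using bound[OF that] unfolding B_def abs_le_iff by linarith
  qed
  moreover have "0 \<le> B"
    unfolding B_def using m_less_M gamma_pos[OF T] by simp
  ultimately show ?thesis
    using run.regret_le_twice_gap[of T] run.gap_le[of B T] unfolding L_def by simp
qed

lemma expected_sqrt_variance_le:
  assumes T: "1 \<le> T"
  defines "L \<equiv> ln (real (card A))" and "d \<equiv> real CARD('d)"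
  shows "path_expectation T (\<lambda>X. sqrt (L * (\<Sum>t=1..T. \<Sum>x\<in>A. weights X t x * (x \<bullet> estimate X t)^2)))
    \<le> (M - m) * sqrt (2 * d * T * L)"
proof (rule path_expectation_sqrt_le)
  have L: "0 < L" unfolding L_def using card_A by simp
  show "0 \<le> L * (\<Sum>t=1..T. \<Sum>x\<in>A. weights X t x * (x \<bullet> estimate X t)^2)" for X
    using L distribution_onD(1)[OF weights_distribution]
    by (auto intro!: mult_nonneg_nonneg sum_nonneg)
  have "path_expectation T (\<lambda>X. \<Sum>t=1..T. \<Sum>x\<in>A. weights X t x * (x \<bullet> estimate X t)^2)
      = (\<Sum>t=1..T. path_expectation T (\<lambda>X. \<Sum>x\<in>A. weights X t x * (x \<bullet> estimate X t)^2))"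
    by (rule path_expectation_sum)
  also have "\<dots> \<le> (\<Sum>t=1..T. 2 * d * (M - m)^2)"
    unfolding d_def by (intro sum_mono expected_variance_le) auto
  finally have "path_expectation T (\<lambda>X. L * (\<Sum>t=1..T. \<Sum>x\<in>A. weights X t x * (x \<bullet> estimate X t)^2))
      \<le> L * (T * (2 * d * (M - m)^2))"
    using L by (simp add: path_expectation_cmult)
  also have "\<dots> = ((M - m) * sqrt (2 * d * T * L))^2"
    using L by (simp add: d_def power_mult_distrib)
  finally show "path_expectation T (\<lambda>X. L * (\<Sum>t=1..T. \<Sum>x\<in>A. weights X t x * (x \<bullet> estimate X t)^2))
      \<le> ((M - m) * sqrt (2 * d * T * L))^2" .
  show "0 < (M - m) * sqrt (2 * d * T * L)" using L m_less_M T by (simp add: d_def)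
qed

lemma regret_le:
  assumes T: "1 \<le> T"
  defines "L \<equiv> ln (real (card A))" and "d \<equiv> real CARD('d)"
  shows "ah_regret A \<pi> \<gamma> y T \<le> 2 * (M - m) * sqrt (2 * d * T * L)
    + 4 * (M - m) * (2/3 * L + 1) * (d / \<gamma> T) + (M - m) * (\<Sum>t=1..T. \<gamma> t)"
proof -
  define mix_loss where "mix_loss X = (\<Sum>t=1..T. \<Sum>x\<in>A. weights X t x * (x \<bullet> estimate X t))" for X
  define var where "var X = (\<Sum>t=1..T. \<Sum>x\<in>A. weights X t x * (x \<bullet> estimate X t)^2)" for X
  define B where "B = 2 * ((M - m) * d / \<gamma> T)"
  have "ah_regret A \<pi> \<gamma> y T
      \<le> path_expectation T (\<lambda>X. Max ((\<lambda>x. x \<bullet> fst (state X T)) ` A))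
        - (path_expectation T mix_loss - (M - m) * (\<Sum>t=1..T. \<gamma> t))"
    using expected_best_le[of T] expected_mix_loss_le[of T]
    unfolding ah_regret_def mix_loss_def by simp
  also have "\<dots> = path_expectation T (\<lambda>X. Max ((\<lambda>x. x \<bullet> fst (state X T)) ` A) - mix_loss X)
      + (M - m) * (\<Sum>t=1..T. \<gamma> t)"
    by (simp add: path_expectation_diff)
  also have "\<dots> \<le> path_expectation T (\<lambda>X. 2 * sqrt (L * var X) + 2 * ((2/3 * L + 1) * B))
      + (M - m) * (\<Sum>t=1..T. \<gamma> t)"
    unfolding mix_loss_def var_def L_def B_def d_def
    by (intro add_right_mono path_expectation_mono path_regret_le[OF _ T])
  also have "\<dots> = 2 * path_expectation T (\<lambda>X. sqrt (L * var X)) + 2 * ((2/3 * L + 1) * B)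
      + (M - m) * (\<Sum>t=1..T. \<gamma> t)"
    by (simp add: path_expectation_add path_expectation_cmult path_expectation_const)
  also have "\<dots> \<le> 2 * ((M - m) * sqrt (2 * d * T * L)) + 2 * ((2/3 * L + 1) * B)
      + (M - m) * (\<Sum>t=1..T. \<gamma> t)"
    using expected_sqrt_variance_le[OF T] unfolding var_def L_def d_def by simp
  also have "2 * ((M - m) * sqrt (2 * d * T * L)) + 2 * ((2/3 * L + 1) * B)
      = 2 * (M - m) * sqrt (2 * d * T * L) + 4 * (M - m) * (2/3 * L + 1) * (d / \<gamma> T)"
    unfolding B_def using gamma_pos[OF T] by (simp add: field_simps)
  finally show ?thesis .
qed

end

section \<open>Tuning of the exploration rates\<close>

lemma ah_gamma_bounds:
  fixes A :: "(real^'d) set"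
  assumes "2 \<le> card A"
  shows "0 \<le> ah_gamma A t" and "ah_gamma A t \<le> 1/2"
    and "1 \<le> t \<Longrightarrow> 0 < ah_gamma A t"
proof -
  have "0 < ln (real (card A))" using assms by simp
  thus "0 \<le> ah_gamma A t" and "1 \<le> t \<Longrightarrow> 0 < ah_gamma A t"
    unfolding ah_gamma_def by simp_all
  show "ah_gamma A t \<le> 1/2" unfolding ah_gamma_def by (rule min.cobounded1)
qed

lemma ah_gamma_antimono:
  fixes A :: "(real^'d) set"
  assumes "2 \<le> card A" "1 \<le> s" "s \<le> t"
  shows "ah_gamma A t \<le> ah_gamma A s"
proof -
  have "sqrt (5/2 * real CARD('d) * ln (real (card A))) / sqrt (real t)
      \<le> sqrt (5/2 * real CARD('d) * ln (real (card A))) / sqrt (real s)"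
    using assms by (intro divide_left_mono) auto
  thus ?thesis unfolding ah_gamma_def by linarith
qed

lemma sum_inverse_sqrt_le: "(\<Sum>t=1..T. 1 / sqrt (real t)) \<le> 2 * sqrt (real T)"
proof (induction T)
  case (Suc T)
  have "1 = (sqrt (Suc T) + sqrt T) * (sqrt (Suc T) - sqrt T)"
    by (simp add: algebra_simps)
  also have "\<dots> \<le> 2 * sqrt (Suc T) * (sqrt (Suc T) - sqrt T)"
    by (intro mult_right_mono) auto
  finally have "1 \<le> (2 * sqrt (Suc T) - 2 * sqrt T) * sqrt (Suc T)"
    by (simp add: algebra_simps)
  hence "1 / sqrt (Suc T) \<le> 2 * sqrt (Suc T) - 2 * sqrt T"
    by (simp add: divide_le_eq)
  thus ?case using Suc by simp
qed simp

lemma sum_ah_gamma_le: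
  fixes A :: "(real^'d) set"
  assumes "2 \<le> card A"
  shows "(\<Sum>t=1..T. ah_gamma A t)
    \<le> 2 * sqrt (5/2 * real CARD('d) * ln (real (card A))) * sqrt (real T)"
proof -
  have "(\<Sum>t=1..T. ah_gamma A t)
      \<le> (\<Sum>t=1..T. sqrt (5/2 * real CARD('d) * ln (real (card A))) * (1 / sqrt (real t)))"
    unfolding ah_gamma_def by (intro sum_mono) simp
  also have "\<dots> \<le> sqrt (5/2 * real CARD('d) * ln (real (card A))) * (2 * sqrt (real T))"
    unfolding sum_distrib_left[symmetric] using assms
    by (intro mult_left_mono sum_inverse_sqrt_le) simp
  finally show ?thesis by simp
qed

lemma inverse_ah_gamma_le:
  fixes A :: "(real^'d) set"
  assumes "2 \<le> card A" "1 \<le> t"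
  shows "1 / ah_gamma A t \<le> 2 + sqrt (real t) / sqrt (5/2 * real CARD('d) * ln (real (card A)))"
proof -
  define g0 where "g0 = sqrt (5/2 * real CARD('d) * ln (real (card A)))"
  have "0 < g0" "0 < sqrt (real t)" unfolding g0_def using assms by auto
  hence "1 / min (1/2) (g0 / sqrt (real t)) \<le> 2 + sqrt (real t) / g0"
    by (cases "1/2 \<le> g0 / sqrt (real t)") (auto simp: min_def)
  thus ?thesis by (simp add: ah_gamma_def g0_def)
qed

lemma tuned_constants_le:
  fixes c d L R :: real
  assumes c: "0 \<le> c" and d: "1 \<le> d" and L: "2/3 \<le> L" and R: "0 \<le> R"
  shows "2 * c * (sqrt 2 * R) + 4 * c * (2/3 * L + 1) * (2 * d + R / (sqrt (5/2) * L))
      + c * (2 * (sqrt (5/2) * R)) \<le> 12 * c * R + 18 * c * d * L"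
proof -
  define w where "w = R / (sqrt (5/2) * L)"
  have "sqrt 2 \<le> 283/200" by (rule real_le_lsqrt) (simp_all add: power2_eq_square)
  hence s2: "sqrt 2 * R \<le> 283/200 * R" using R by (rule mult_right_mono)
  have "sqrt (5/2) \<le> 3953/2500" by (rule real_le_lsqrt) (simp_all add: power2_eq_square)
  hence s5: "sqrt (5/2) * R \<le> 3953/2500 * R" using R by (rule mult_right_mono)
  have s5': "79/50 \<le> sqrt (5/2)" by (rule real_le_rsqrt) (simp add: power2_eq_square)
  have "(2/3 * L + 1) * w = R / sqrt (5/2) * (2/3 + 1 / L)"
    unfolding w_def using L s5' by (simp add: field_simps)
  also have "\<dots> \<le> R / (79/50) * (2/3 + 3/2)"
    using R L s5' by (intro mult_mono divide_left_mono) (auto simp: field_simps)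
  finally have "(2/3 * L + 1) * w \<le> 325/237 * R" by simp
  moreover have "8 * d \<le> 12 * (d * L)" and "0 \<le> d * L" using d L by simp_all
  moreover have "4 * (2/3 * L + 1) * (2 * d + w) = 16/3 * (d * L) + 8 * d + 4 * ((2/3 * L + 1) * w)"
    by (simp add: algebra_simps)
  ultimately have "2 * (sqrt 2 * R) + 4 * (2/3 * L + 1) * (2 * d + w) + 2 * (sqrt (5/2) * R)
      \<le> 12 * R + 18 * (d * L)"
    using s2 s5 R by linarith
  from mult_left_mono[OF this c] show ?thesis
    by (fold w_def) (simp add: algebra_simps)
qed

lemma tuned_bound_le:
  fixes c d T L :: real
  assumes c: "0 \<le> c" and d: "1 \<le> d" and T: "0 \<le> T" and L: "2/3 \<le> L"
  shows "2 * c * sqrt (2 * d * T * L)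
      + 4 * c * (2/3 * L + 1) * (d * (2 + sqrt T / sqrt (5/2 * d * L)))
      + c * (2 * sqrt (5/2 * d * L) * sqrt T)
    \<le> 12 * c * sqrt (d * T * L) + 18 * c * d * L"
proof -
  define R where "R = sqrt (d * T * L)"
  have e1: "sqrt (2 * d * T * L) = sqrt 2 * R"
    and e2: "2 * sqrt (5/2 * d * L) * sqrt T = 2 * (sqrt (5/2) * R)"
    unfolding R_def by (simp_all add: real_sqrt_mult[symmetric] ac_simps)
  have e3: "d * (2 + sqrt T / sqrt (5/2 * d * L)) = 2 * d + R / (sqrt (5/2) * L)"
  proof -
    have "sqrt (5/2 * d * L) = sqrt (5/2) * sqrt d * sqrt L" and "R = sqrt d * sqrt T * sqrt L"
      unfolding R_def by (simp_all only: real_sqrt_mult)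
    moreover have "sqrt d * sqrt d = d" "sqrt L * sqrt L = L" "0 < sqrt d" "0 < sqrt L"
      using d L by simp_all
    ultimately show ?thesis by (simp add: field_simps)
  qed
  have "0 \<le> R" unfolding R_def using d T L by simp
  from tuned_constants_le[OF c d L this] show ?thesis
    unfolding e1 mult.assoc[of c 2] e2 e3 R_def[symmetric] by (simp only: ac_simps)
qed

lemma ah_gamma_regret_terms_le:
  fixes A :: "(real^'d) set"
  assumes K: "2 \<le> card A" and T: "1 \<le> T" and c: "0 \<le> c"
  defines "L \<equiv> ln (real (card A))" and "d \<equiv> real CARD('d)"
  shows "2 * c * sqrt (2 * d * T * L) + 4 * c * (2/3 * L + 1) * (d / ah_gamma A T)
      + c * (\<Sum>t=1..T. ah_gamma A t)
    \<le> 12 * c * sqrt (d * real T * L) + 18 * c * d * L"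
proof -
  define g0 where "g0 = sqrt (5/2 * d * L)"
  have "ln 2 \<le> L" unfolding L_def using K by simp
  hence L: "2/3 \<le> L" using ln2_ge_two_thirds by linarith
  have "d / ah_gamma A T \<le> d * (2 + sqrt T / g0)"
    using mult_left_mono[OF inverse_ah_gamma_le[OF K T], of d]
    unfolding g0_def L_def d_def by simp
  moreover have "0 \<le> 4 * c * (2/3 * L + 1)" using c L by simp
  moreover have "(\<Sum>t=1..T. ah_gamma A t) \<le> 2 * g0 * sqrt T"
    using sum_ah_gamma_le[OF K] unfolding g0_def L_def d_def .
  ultimately have "2 * c * sqrt (2 * d * T * L) + 4 * c * (2/3 * L + 1) * (d / ah_gamma A T)
      + c * (\<Sum>t=1..T. ah_gamma A t)
    \<le> 2 * c * sqrt (2 * d * T * L) + 4 * c * (2/3 * L + 1) * (d * (2 + sqrt T / g0))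
      + c * (2 * g0 * sqrt T)"
    using c by (intro add_mono order.refl mult_left_mono) auto
  also have "\<dots> \<le> 12 * c * sqrt (d * real T * L) + 18 * c * d * L"
    unfolding g0_def d_def using c L by (intro tuned_bound_le) auto
  finally show ?thesis .
qed

theorem theorem5:
  fixes A :: "(real^'d) set" and \<pi> :: "real^'d \<Rightarrow> real"
    and y :: "nat \<Rightarrow> real^'d" and m M :: real and T :: nat
  assumes "finite A" and "card A \<ge> 2" and "span A = UNIV"
    and "\<forall>a\<in>A. \<pi> a \<ge> 0" and "(\<Sum>a\<in>A. \<pi> a) = 1"
    and "invertible (Mmat A \<pi>)"
    and "Max ((\<lambda>x. x \<bullet> (matrix_inv (Mmat A \<pi>) *v x)) ` A) = real CARD('d)"
    and "m < M" and "m \<le> 0" and "0 \<le> M"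
    and "\<forall>t\<ge>1. \<forall>x\<in>A. m \<le> x \<bullet> y t \<and> x \<bullet> y t \<le> M"
    and "T \<ge> 1"
  shows "ah_regret A \<pi> (ah_gamma A) y T
         \<le> 12 * (M - m) * sqrt (real CARD('d) * real T * ln (real (card A)))
           + 18 * (M - m) * real CARD('d) * ln (real (card A))"
proof -
  interpret adahedge_bandit A \<pi> y m M "ah_gamma A"
    using assms ah_gamma_bounds[OF assms(2)] ah_gamma_antimono[OF assms(2)]
    by unfold_locales (auto simp: distribution_on_def)
  have "ah_regret A \<pi> (ah_gamma A) y T
      \<le> 2 * (M - m) * sqrt (2 * real CARD('d) * T * ln (real (card A)))
        + 4 * (M - m) * (2/3 * ln (real (card A)) + 1) * (real CARD('d) / ah_gamma A T)
        + (M - m) * (\<Sum>t=1..T. ah_gamma A t)"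
    by (rule regret_le[OF assms(12)])
  also have "\<dots> \<le> 12 * (M - m) * sqrt (real CARD('d) * real T * ln (real (card A)))
      + 18 * (M - m) * real CARD('d) * ln (real (card A))"
    using assms(8) by (intro ah_gamma_regret_terms_le[OF assms(2,12)]) simp
  finally show ?thesis .
qed

end
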